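(* Fix $q\in\mathbb R$, a bounded sequence $\{x_n\}\subset\mathbb R^n$, and sequences $T_n\to\infty$, $q_n\to q$. Let $\varphi^n\in\mathcal A^{x_n}_{T_n}(q_n)$ satisfy $I^{x_n}_{T_n}(\varphi^n)=S^{x_n}_{T_n}(q_n)$, and set $y_n:=\varphi^n_{T_n}$. Then there exists $C>0$ such that $|y_n|\le C(T_n+1)$ for all $n\ge1$.
   Context: Standing assumptions: $V\in C^2(\mathbb R^n;\mathbb R)$ satisfies $\lim_{|x|\to\infty}\langle\nabla V(x),x\rangle/|x|=+\infty$; $b:\mathbb R^n\to\mathbb R^n$ is a $C^1$, bounded vector field with bounded first derivatives, not conservative; and $\langle\nabla V(x),b(x)\rangle=0$ for every $x$. Set $c:=-\tfrac12\nabla V+b$. For $T>0$: $H_T$ is the set of absolutely continuous $\varphi:[0,T]\to\mathbb R^n$ with $\int_0^T|\dot\varphi_t|^2dt<\infty$, $H^x_T:=\{\varphi\in H_T:\varphi_0=x\}$; $I^x_T(\varphi):=\frac12\int_0^T|\dot\varphi_t-c(\varphi_t)|^2dt$ for $\varphi\in H^x_T$, $+\infty$ otherwise; $\mathcal L_T(\varphi):=\frac2T\int_0^T\langle b(\varphi_t),\dot\varphi_t\rangle dt$; $\mathcal A^x_T(q):=\{\varphi\in H^x_T:\mathcal L_T(\varphi)=q\}$; $S^x_T(q):=\inf\{I^x_T(\varphi):\varphi\in\mathcal A^x_T(q)\}$. *)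

theory Defs
  imports "HOL-Analysis.Analysis"
begin

definition abs_cont_on :: "real \<Rightarrow> real \<Rightarrow> (real \<Rightarrow> 'a::real_normed_vector) \<Rightarrow> bool" where
  "abs_cont_on a b f \<longleftrightarrow>
     (\<forall>\<epsilon>>0. \<exists>\<delta>>0. \<forall>(k::nat) (l::nat \<Rightarrow> real) (r::nat \<Rightarrow> real).
        (\<forall>i<k. a \<le> l i \<and> l i \<le> r i \<and> r i \<le> b) \<longrightarrow>
        (\<forall>i<k. \<forall>j<k. i \<noteq> j \<longrightarrow> r i \<le> l j \<or> r j \<le> l i) \<longrightarrow>
        (\<Sum>i<k. r i - l i) < \<delta> \<longrightarrow>
        (\<Sum>i<k. norm (f (r i) - f (l i))) < \<epsilon>)"

definition dpath :: "real \<Rightarrow> (real \<Rightarrow> 'a::real_normed_vector) \<Rightarrow> real \<Rightarrow> 'a" where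
  "dpath T \<phi> t = vector_derivative \<phi> (at t within {0..T})"

definition H_T :: "real \<Rightarrow> (real \<Rightarrow> 'a::euclidean_space) set" where
  "H_T T = {\<phi>. abs_cont_on 0 T \<phi> \<and>
      (AE t in lebesgue. t \<in> {0..T} \<longrightarrow> \<phi> differentiable (at t within {0..T})) \<and>
      set_integrable lebesgue {0..T} (\<lambda>t. (norm (dpath T \<phi> t))\<^sup>2)}"

definition H_Tx :: "real \<Rightarrow> 'a::euclidean_space \<Rightarrow> (real \<Rightarrow> 'a) set" where
  "H_Tx T x = {\<phi> \<in> H_T T. \<phi> 0 = x}"

definition cfield :: "('a::euclidean_space \<Rightarrow> 'a) \<Rightarrow> ('a \<Rightarrow> 'a) \<Rightarrow> 'a \<Rightarrow> 'a" where
  "cfield gV b x = - (1/2) *\<^sub>R gV x + b x"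

definition I_T :: "('a::euclidean_space \<Rightarrow> 'a) \<Rightarrow> ('a \<Rightarrow> 'a) \<Rightarrow> real \<Rightarrow> 'a \<Rightarrow> (real \<Rightarrow> 'a) \<Rightarrow> ereal" where
  "I_T gV b T x \<phi> = (if \<phi> \<in> H_Tx T x then
      ereal ((1/2) * (LINT t:{0..T}|lebesgue. (norm (dpath T \<phi> t - cfield gV b (\<phi> t)))\<^sup>2))
    else \<infinity>)"

definition L_T :: "('a::euclidean_space \<Rightarrow> 'a) \<Rightarrow> real \<Rightarrow> (real \<Rightarrow> 'a) \<Rightarrow> real" where
  "L_T b T \<phi> = (2 / T) * (LINT t:{0..T}|lebesgue. inner (b (\<phi> t)) (dpath T \<phi> t))"

definition A_T :: "('a::euclidean_space \<Rightarrow> 'a) \<Rightarrow> real \<Rightarrow> 'a \<Rightarrow> real \<Rightarrow> (real \<Rightarrow> 'a) set" where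
  "A_T b T x q = {\<phi> \<in> H_Tx T x. L_T b T \<phi> = q}"

definition S_T :: "('a::euclidean_space \<Rightarrow> 'a) \<Rightarrow> ('a \<Rightarrow> 'a) \<Rightarrow> real \<Rightarrow> 'a \<Rightarrow> real \<Rightarrow> ereal" where
  "S_T gV b T x q = (INF \<phi>\<in>A_T b T x q. I_T gV b T x \<phi>)"

end

theory Submission
  imports Defs
begin

text \<open>
  Since \<open>\<langle>\<nabla>V, b\<rangle> = 0\<close>, the action density dominates the power of the potential:
  \<open>\<langle>\<nabla>V(\<phi>), \<phi>'\<rangle> \<le> |\<phi>' - c(\<phi>)|\<^sup>2 / 2\<close>.  Integrating along a path of \<open>H_T\<close> gives the energy
  inequality \<open>V(\<phi>_T) - V(\<phi>_0) \<le> I(\<phi>)\<close>, while the growth condition on \<open>\<nabla>V\<close> makes \<open>V\<close> coercive,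
  \<open>|y| \<le> V(y) + B\<close>.  So it suffices to bound the minimal action \<open>S_T(q_n)\<close> by \<open>O(T_n)\<close>, which is
  done with explicit competitors: as \<open>b\<close> has no potential, some triangle has nonzero circulation
  of \<open>b\<close>; the competitor goes straight from \<open>x_n\<close> to the origin and then runs around this
  triangle (in the appropriate direction) at a constant speed chosen by the intermediate value
  theorem so that the constraint \<open>L_T = q_n\<close> holds exactly.  Its speed, hence its action per
  unit time, stays bounded.
\<close>

lemma abs_cont_onD:
  assumes "abs_cont_on a b f" "e > 0"
  obtains d where "d > 0" "\<And>(k::nat) (l::nat \<Rightarrow> real) r.
        \<forall>i<k. a \<le> l i \<and> l i \<le> r i \<and> r i \<le> b \<Longrightarrow>
        \<forall>i<k. \<forall>j<k. i \<noteq> j \<longrightarrow> r i \<le> l j \<or> r j \<le> l i \<Longrightarrow>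
        (\<Sum>i<k. r i - l i) < d \<Longrightarrow> (\<Sum>i<k. norm (f (r i) - f (l i))) < e"
proof -
  from assms obtain d where "d > 0" and "\<forall>(k::nat) (l::nat \<Rightarrow> real) r.
        (\<forall>i<k. a \<le> l i \<and> l i \<le> r i \<and> r i \<le> b) \<longrightarrow>
        (\<forall>i<k. \<forall>j<k. i \<noteq> j \<longrightarrow> r i \<le> l j \<or> r j \<le> l i) \<longrightarrow>
        (\<Sum>i<k. r i - l i) < d \<longrightarrow> (\<Sum>i<k. norm (f (r i) - f (l i))) < e"
    unfolding abs_cont_on_def by blast
  then show ?thesis using that by blast
qed

lemma abs_cont_on_continuous:
  fixes f :: "real \<Rightarrow> 'a::real_normed_vector"
  assumes "abs_cont_on a b f"
  shows "continuous_on {a..b} f"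
  unfolding continuous_on_iff
proof (intro ballI allI impI)
  fix x e assume x: "x \<in> {a..b}" and e: "(0::real) < e"
  obtain d where d: "d > 0" and H: "\<And>(k::nat) (l::nat \<Rightarrow> real) r.
        \<forall>i<k. a \<le> l i \<and> l i \<le> r i \<and> r i \<le> b \<Longrightarrow>
        \<forall>i<k. \<forall>j<k. i \<noteq> j \<longrightarrow> r i \<le> l j \<or> r j \<le> l i \<Longrightarrow>
        (\<Sum>i<k. r i - l i) < d \<Longrightarrow> (\<Sum>i<k. norm (f (r i) - f (l i))) < e"
    using abs_cont_onD[OF assms e] by blast
  show "\<exists>d>0. \<forall>x'\<in>{a..b}. dist x' x < d \<longrightarrow> dist (f x') (f x) < e"
  proof (intro exI[of _ d] conjI ballI impI d)
    fix y assume y: "y \<in> {a..b}" and dy: "dist y x < d"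
    have "(\<Sum>i<(1::nat). max x y - min x y) < d"
      using dy by (auto simp add: dist_real_def max_def min_def abs_if)
    then have "norm (f (max x y) - f (min x y)) < e"
      using H[of 1 "\<lambda>_. min x y" "\<lambda>_. max x y"] x y by auto
    moreover have "norm (f (max x y) - f (min x y)) = dist (f y) (f x)"
      by (cases "x \<le> y") (simp_all add: dist_norm max_def min_def norm_minus_commute)
    ultimately show "dist (f y) (f x) < e" by simp
  qed
qed

lemma abs_cont_on_compose_lipschitz:
  fixes f :: "real \<Rightarrow> 'a::real_normed_vector" and g :: "'a \<Rightarrow> 'b::real_normed_vector"
  assumes "abs_cont_on a b f" and L: "L > 0"
    and lip: "\<And>u v. u \<in> f ` {a..b} \<Longrightarrow> v \<in> f ` {a..b} \<Longrightarrow> norm (g u - g v) \<le> L * norm (u - v)"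
  shows "abs_cont_on a b (g \<circ> f)"
  unfolding abs_cont_on_def
proof (intro allI impI)
  fix e :: real assume e: "e > 0"
  obtain d where d: "d > 0" and H: "\<And>(k::nat) (l::nat \<Rightarrow> real) r.
        \<forall>i<k. a \<le> l i \<and> l i \<le> r i \<and> r i \<le> b \<Longrightarrow>
        \<forall>i<k. \<forall>j<k. i \<noteq> j \<longrightarrow> r i \<le> l j \<or> r j \<le> l i \<Longrightarrow>
        (\<Sum>i<k. r i - l i) < d \<Longrightarrow> (\<Sum>i<k. norm (f (r i) - f (l i))) < e / L"
    using abs_cont_onD[OF assms(1) divide_pos_pos[OF e L]] by blast
  show "\<exists>d>0. \<forall>(k::nat) (l::nat \<Rightarrow> real) r.
        (\<forall>i<k. a \<le> l i \<and> l i \<le> r i \<and> r i \<le> b) \<longrightarrow>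
        (\<forall>i<k. \<forall>j<k. i \<noteq> j \<longrightarrow> r i \<le> l j \<or> r j \<le> l i) \<longrightarrow>
        (\<Sum>i<k. r i - l i) < d \<longrightarrow> (\<Sum>i<k. norm ((g \<circ> f) (r i) - (g \<circ> f) (l i))) < e"
  proof (intro exI[of _ d] conjI allI impI d)
    fix k :: nat and l r :: "nat \<Rightarrow> real"
    assume lr: "\<forall>i<k. a \<le> l i \<and> l i \<le> r i \<and> r i \<le> b"
      and disj: "\<forall>i<k. \<forall>j<k. i \<noteq> j \<longrightarrow> r i \<le> l j \<or> r j \<le> l i"
      and small: "(\<Sum>i<k. r i - l i) < d"
    have "(\<Sum>i<k. norm ((g \<circ> f) (r i) - (g \<circ> f) (l i))) \<le> (\<Sum>i<k. L * norm (f (r i) - f (l i)))"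
      using lr by (intro sum_mono) (auto intro!: lip)
    also have "\<dots> = L * (\<Sum>i<k. norm (f (r i) - f (l i)))" by (simp add: sum_distrib_left)
    also have "\<dots> < L * (e / L)" using H[OF lr disj small] L by (intro mult_strict_left_mono) auto
    finally show "(\<Sum>i<k. norm ((g \<circ> f) (r i) - (g \<circ> f) (l i))) < e" using L by simp
  qed
qed

lemma lipschitz_imp_abs_cont_on:
  fixes f :: "real \<Rightarrow> 'a::real_normed_vector"
  assumes L: "L \<ge> 0"
    and lip: "\<And>s t. s \<in> {a..b} \<Longrightarrow> t \<in> {a..b} \<Longrightarrow> norm (f s - f t) \<le> L * \<bar>s - t\<bar>"
  shows "abs_cont_on a b f"
  unfolding abs_cont_on_def
proof (intro allI impI)
  fix e :: real assume e: "e > 0"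
  show "\<exists>d>0. \<forall>(k::nat) (l::nat \<Rightarrow> real) r.
        (\<forall>i<k. a \<le> l i \<and> l i \<le> r i \<and> r i \<le> b) \<longrightarrow>
        (\<forall>i<k. \<forall>j<k. i \<noteq> j \<longrightarrow> r i \<le> l j \<or> r j \<le> l i) \<longrightarrow>
        (\<Sum>i<k. r i - l i) < d \<longrightarrow> (\<Sum>i<k. norm (f (r i) - f (l i))) < e"
  proof (intro exI[of _ "e / (L + 1)"] conjI allI impI)
    show "e / (L + 1) > 0" using e L by simp
    fix k :: nat and l r :: "nat \<Rightarrow> real"
    assume lr: "\<forall>i<k. a \<le> l i \<and> l i \<le> r i \<and> r i \<le> b"
      and small: "(\<Sum>i<k. r i - l i) < e / (L + 1)"
    have "(\<Sum>i<k. norm (f (r i) - f (l i))) \<le> (\<Sum>i<k. L * (r i - l i))"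
    proof (rule sum_mono)
      fix i assume "i \<in> {..<k}"
      then have "l i \<in> {a..b}" "r i \<in> {a..b}" "l i \<le> r i" using lr by auto
      then show "norm (f (r i) - f (l i)) \<le> L * (r i - l i)" using lip[of "r i" "l i"] by simp
    qed
    also have "\<dots> = L * (\<Sum>i<k. r i - l i)" by (simp add: sum_distrib_left)
    also have "\<dots> \<le> L * (e / (L + 1))" using small L by (intro mult_left_mono) auto
    also have "\<dots> < e" using L e by (simp add: field_simps)
    finally show "(\<Sum>i<k. norm (f (r i) - f (l i))) < e" .
  qed
qed

lemma negligible_countable:
  fixes A :: "'a::euclidean_space set"
  assumes "countable A" shows "negligible A"
  using negligible_countable_Union[of "(\<lambda>x. {x}) ` A"] assms by auto

lemma sum_lengths_le_measure:
  fixes l r :: "nat \<Rightarrow> real"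
  assumes lr: "\<And>i. i < k \<Longrightarrow> l i \<le> r i"
    and disj: "\<And>i j. i < k \<Longrightarrow> j < k \<Longrightarrow> i \<noteq> j \<Longrightarrow> r i \<le> l j \<or> r j \<le> l i"
    and sub: "\<And>i. i < k \<Longrightarrow> {l i..r i} \<subseteq> G" and G: "G \<in> lmeasurable"
  shows "(\<Sum>i<k. r i - l i) \<le> measure lebesgue G"
proof -
  have "pairwise (\<lambda>i j. negligible ({l i..r i} \<inter> {l j..r j})) {..<k}"
  proof (intro pairwiseI)
    fix i j assume "i \<in> {..<k}" "j \<in> {..<k}" "i \<noteq> j"
    then have "{l i..r i} \<inter> {l j..r j} \<subseteq> {r i, r j}" using disj by fastforce
    then show "negligible ({l i..r i} \<inter> {l j..r j})"
      by (rule negligible_subset[rotated]) auto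
  qed
  then have "measure lebesgue (\<Union>i\<in>{..<k}. {l i..r i}) = (\<Sum>i<k. measure lebesgue {l i..r i})"
    by (intro measure_negligible_finite_Union_image) auto
  also have "\<dots> = (\<Sum>i<k. r i - l i)" using lr by (intro sum.cong) auto
  finally have "(\<Sum>i<k. r i - l i) = measure lebesgue (\<Union>i\<in>{..<k}. {l i..r i})" ..
  also have "\<dots> \<le> measure lebesgue G"
    using sub G by (intro measure_mono_fmeasurable) auto
  finally show ?thesis .
qed

lemma negligible_small_open_neighbourhood:
  fixes E :: "'a::euclidean_space set"
  assumes E: "negligible E" and \<delta>: "\<delta> > 0"
  obtains G where "open G" "E \<subseteq> G" "G \<in> lmeasurable" "measure lebesgue G < \<delta>"
proof -
  have Elm: "E \<in> lmeasurable" and E0: "measure lebesgue E = 0"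
    using E by (auto intro: negligible_imp_measurable negligible_imp_measure0)
  obtain G where G: "open G" "E \<subseteq> G" "G - E \<in> lmeasurable" "emeasure lebesgue (G - E) < ennreal \<delta>"
    using sets_lebesgue_outer_open[OF negligible_imp_sets[OF E] \<delta>] by blast
  have GE: "G = (G - E) \<union> E" using G(2) by auto
  have Glm: "G \<in> lmeasurable" using G(3) Elm by (subst GE) (rule fmeasurable.Un)
  have "measure lebesgue G \<le> measure lebesgue (G - E) + measure lebesgue E"
    using G(3) Elm by (subst GE) (intro measure_Un_le; auto)
  moreover have "measure lebesgue (G - E) < \<delta>"
    using G(3,4) \<delta> by (simp add: emeasure_eq_measure2 ennreal_less_iff)
  ultimately have "measure lebesgue G < \<delta>" using E0 by linarith
  with G(1,2) Glm show ?thesis by (rule that)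
qed

lemma tagged_division_real_interval:
  fixes p :: "(real \<times> real set) set"
  assumes "p tagged_division_of {a..b}" "(x, K) \<in> p"
  obtains u v where "K = {u..v}" "u \<le> v" "x \<in> K" "K \<subseteq> {a..b}"
proof -
  obtain u v where "K = cbox u v" "x \<in> K" "K \<subseteq> {a..b}"
    using tagged_division_ofD(2,3,4)[OF assms] by blast
  then show ?thesis using that by auto
qed

lemma tagged_division_real_nonoverlap:
  fixes p :: "(real \<times> real set) set"
  assumes p: "p tagged_division_of {a..b}"
    and in_p: "(x, {u..v}) \<in> p" "(x', {u'..v'}) \<in> p" "(x, {u..v}) \<noteq> (x', {u'..v'})"
    and uv: "u < v" "u' < v'"
  shows "v \<le> u' \<or> v' \<le> u"
proof (rule ccontr)
  assume "\<not> (v \<le> u' \<or> v' \<le> u)"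
  then have "(max u u' + min v v') / 2 \<in> interior {u..v} \<inter> interior {u'..v'}"
    using uv by (auto simp: max_def min_def)
  then show False using tagged_division_ofD(5)[OF p in_p] by blast
qed

lemma tagged_division_enumerate:
  fixes p :: "(real \<times> real set) set" and F :: "real \<Rightarrow> 'a::real_normed_vector"
  assumes p: "p tagged_division_of {a..b}" and qp: "q \<subseteq> p"
  obtains k :: nat and l r :: "nat \<Rightarrow> real"
  where "\<And>i. i < k \<Longrightarrow> \<exists>x. (x, {l i..r i}) \<in> q \<and> l i < r i"
    "\<And>i j. i < k \<Longrightarrow> j < k \<Longrightarrow> i \<noteq> j \<Longrightarrow> r i \<le> l j \<or> r j \<le> l i"
    "(\<Sum>(x, K)\<in>q. norm (F (Sup K) - F (Inf K))) = (\<Sum>i<k. norm (F (r i) - F (l i)))"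
proof -
  define q' where "q' = {(x, K) \<in> q. Inf K < Sup K}"
  have finq: "finite q" using finite_subset[OF qp tagged_division_of_finite[OF p]] .
  then have fin: "finite q'" unfolding q'_def by (rule finite_subset[rotated]) auto
  have "(\<Sum>(x, K)\<in>q. norm (F (Sup K) - F (Inf K))) = (\<Sum>(x, K)\<in>q'. norm (F (Sup K) - F (Inf K)))"
  proof (rule sum.mono_neutral_right[OF finq])
    show "\<forall>y\<in>q - q'. (case y of (x, K) \<Rightarrow> norm (F (Sup K) - F (Inf K))) = 0"
    proof clarify
      fix x K assume "(x, K) \<in> q" "(x, K) \<notin> q'"
      then have xK: "(x, K) \<in> p" "\<not> Inf K < Sup K" using qp by (auto simp: q'_def)
      then obtain u v where "K = {u..v}" "u \<le> v" using tagged_division_real_interval[OF p] by metis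
      then show "norm (F (Sup K) - F (Inf K)) = 0" using xK(2) by simp
    qed
  qed (auto simp: q'_def)
  obtain h where h: "bij_betw h {..<card q'} q'"
    using ex_bij_betw_nat_finite[OF fin] by (auto simp: atLeast0LessThan)
  define l where "l i = Inf (snd (h i))" for i
  define r where "r i = Sup (snd (h i))" for i
  have hi: "h i = (fst (h i), {l i..r i})" "h i \<in> q" "l i < r i" if i: "i < card q'" for i
  proof -
    obtain x K where hK: "h i = (x, K)" by (cases "h i")
    have "h i \<in> q'" using h i by (auto simp: bij_betw_def)
    then have xK: "(x, K) \<in> q" "Inf K < Sup K" using hK by (auto simp: q'_def)
    moreover obtain u v where "K = {u..v}" "u \<le> v"
      using tagged_division_real_interval[OF p] xK(1) qp by blast
    ultimately show "h i = (fst (h i), {l i..r i})" "h i \<in> q" "l i < r i"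
      using hK by (auto simp: l_def r_def)
  qed
  show ?thesis
  proof (rule that[of "card q'" l r])
    show "\<exists>x. (x, {l i..r i}) \<in> q \<and> l i < r i" if i: "i < card q'" for i
      using hi[OF i] by (intro exI[of _ "fst (h i)"]) simp
    show "r i \<le> l j \<or> r j \<le> l i" if ij: "i < card q'" "j < card q'" "i \<noteq> j" for i j
    proof (rule tagged_division_real_nonoverlap[OF p])
      have "h i \<noteq> h j" using h ij unfolding bij_betw_def inj_on_def by auto
      then show "(fst (h i), {l i..r i}) \<noteq> (fst (h j), {l j..r j})"
        using hi(1)[OF ij(1)] hi(1)[OF ij(2)] by simp
      show "(fst (h i), {l i..r i}) \<in> p" "(fst (h j), {l j..r j}) \<in> p"
        using hi(1,2)[OF ij(1)] hi(1,2)[OF ij(2)] qp by auto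
      show "l i < r i" "l j < r j" using hi(3) ij by auto
    qed
    show "(\<Sum>(x, K)\<in>q. norm (F (Sup K) - F (Inf K))) = (\<Sum>i<card q'. norm (F (r i) - F (l i)))"
      unfolding \<open>(\<Sum>(x, K)\<in>q. _) = _\<close>
      using sum.reindex_bij_betw[OF h, of "\<lambda>(x, K). norm (F (Sup K) - F (Inf K))"]
      by (simp add: l_def r_def split_def)
  qed
qed

lemma abs_cont_on_tags_near_negligible:
  fixes F :: "real \<Rightarrow> 'a::real_normed_vector"
  assumes ac: "abs_cont_on a b F" and E: "negligible E" and e: "e > 0"
  obtains G where "open G" "E \<subseteq> G"
    "\<And>p q. p tagged_division_of {a..b} \<Longrightarrow> q \<subseteq> p \<Longrightarrow> (\<And>x K. (x, K) \<in> q \<Longrightarrow> K \<subseteq> G) \<Longrightarrow>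
       (\<Sum>(x, K)\<in>q. norm (F (Sup K) - F (Inf K))) \<le> e"
proof -
  obtain \<delta> where \<delta>: "\<delta> > 0" and H: "\<And>(k::nat) (l::nat \<Rightarrow> real) r.
        \<forall>i<k. a \<le> l i \<and> l i \<le> r i \<and> r i \<le> b \<Longrightarrow>
        \<forall>i<k. \<forall>j<k. i \<noteq> j \<longrightarrow> r i \<le> l j \<or> r j \<le> l i \<Longrightarrow>
        (\<Sum>i<k. r i - l i) < \<delta> \<Longrightarrow> (\<Sum>i<k. norm (F (r i) - F (l i))) < e"
    using abs_cont_onD[OF ac e] by blast
  obtain G where G: "open G" "E \<subseteq> G" "G \<in> lmeasurable" "measure lebesgue G < \<delta>"
    using negligible_small_open_neighbourhood[OF E \<delta>] by blast
  show ?thesis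
  proof (rule that[OF G(1,2)])
    fix p q assume p: "p tagged_division_of {a..b}" and qp: "q \<subseteq> p"
      and qG: "\<And>x K. (x, K) \<in> q \<Longrightarrow> K \<subseteq> G"
    obtain k :: nat and l r :: "nat \<Rightarrow> real"
      where lr: "\<And>i. i < k \<Longrightarrow> \<exists>x. (x, {l i..r i}) \<in> q \<and> l i < r i"
        and disj: "\<And>i j. i < k \<Longrightarrow> j < k \<Longrightarrow> i \<noteq> j \<Longrightarrow> r i \<le> l j \<or> r j \<le> l i"
        and sum: "(\<Sum>(x, K)\<in>q. norm (F (Sup K) - F (Inf K))) = (\<Sum>i<k. norm (F (r i) - F (l i)))"
      using tagged_division_enumerate[OF p qp, of F] by blast
    have sub: "{l i..r i} \<subseteq> G" "a \<le> l i \<and> l i \<le> r i \<and> r i \<le> b" if ik: "i < k" for i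
    proof -
      obtain x where x: "(x, {l i..r i}) \<in> q" "l i < r i" using lr[OF ik] by blast
      then show "{l i..r i} \<subseteq> G" using qG by blast
      obtain u v where "{l i..r i} = {u..v}" "{u..v} \<subseteq> {a..b}"
        using tagged_division_real_interval[OF p] x qp by (metis subsetD)
      then show "a \<le> l i \<and> l i \<le> r i \<and> r i \<le> b" using x(2) by auto
    qed
    have "(\<Sum>i<k. r i - l i) \<le> measure lebesgue G"
      by (rule sum_lengths_le_measure[OF _ disj sub(1) G(3)]) (use sub(2) in blast)
    have "(\<Sum>i<k. norm (F (r i) - F (l i))) < e"
    proof (rule H)
      show "\<forall>i<k. a \<le> l i \<and> l i \<le> r i \<and> r i \<le> b" using sub(2) by blast
      show "\<forall>i<k. \<forall>j<k. i \<noteq> j \<longrightarrow> r i \<le> l j \<or> r j \<le> l i" using disj by blast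
      show "(\<Sum>i<k. r i - l i) < \<delta>" using \<open>(\<Sum>i<k. r i - l i) \<le> _\<close> G(4) by linarith
    qed
    then show "(\<Sum>(x, K)\<in>q. norm (F (Sup K) - F (Inf K))) \<le> e" unfolding sum by simp
  qed
qed

lemma chord_estimate:
  fixes F :: "real \<Rightarrow> 'a::real_normed_vector"
  assumes taylor: "\<And>y. y \<in> {u, v} \<Longrightarrow> norm (F y - F x - (y - x) *\<^sub>R f) \<le> \<epsilon> * \<bar>y - x\<bar>"
    and uxv: "u \<le> x" "x \<le> v"
  shows "norm ((v - u) *\<^sub>R f - (F v - F u)) \<le> \<epsilon> * (v - u)"
proof -
  have "norm ((v - u) *\<^sub>R f - (F v - F u))
      = norm ((F u - F x - (u - x) *\<^sub>R f) - (F v - F x - (v - x) *\<^sub>R f))"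
    by (simp add: algebra_simps)
  also have "\<dots> \<le> \<epsilon> * \<bar>u - x\<bar> + \<epsilon> * \<bar>v - x\<bar>"
    using taylor[of u] taylor[of v] norm_triangle_ineq4 by (smt (verit) insertI1 insertI2 singletonI)
  also have "\<dots> = \<epsilon> * (v - u)" using uxv by (simp add: algebra_simps)
  finally show ?thesis .
qed

lemma derivative_tags_estimate:
  fixes F :: "real \<Rightarrow> 'a::real_normed_vector"
  assumes p: "p tagged_division_of {a..b}" and ab: "a \<le> b" and qp: "q \<subseteq> p" and \<epsilon>: "\<epsilon> \<ge> 0"
    and taylor: "\<And>x K y. (x, K) \<in> q \<Longrightarrow> y \<in> K \<Longrightarrow> norm (F y - F x - (y - x) *\<^sub>R f x) \<le> \<epsilon> * \<bar>y - x\<bar>"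
  shows "norm (\<Sum>(x, K)\<in>q. measure lborel K *\<^sub>R f x - (F (Sup K) - F (Inf K))) \<le> \<epsilon> * (b - a)"
proof -
  have "norm (\<Sum>(x, K)\<in>q. measure lborel K *\<^sub>R f x - (F (Sup K) - F (Inf K)))
      \<le> (\<Sum>(x, K)\<in>q. \<epsilon> * measure lborel K)"
  proof (rule sum_norm_le, clarify)
    fix x K assume xK: "(x, K) \<in> q"
    obtain u v where uv: "K = {u..v}" "u \<le> v" "x \<in> K"
      using tagged_division_real_interval[OF p] xK qp by blast
    have "norm ((v - u) *\<^sub>R f x - (F v - F u)) \<le> \<epsilon> * (v - u)"
      by (rule chord_estimate) (use taylor[OF xK, of u] taylor[OF xK, of v] uv in auto)
    then show "norm (measure lborel K *\<^sub>R f x - (F (Sup K) - F (Inf K))) \<le> \<epsilon> * measure lborel K"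
      using uv by simp
  qed
  also have "\<dots> \<le> (\<Sum>(x, K)\<in>p. \<epsilon> * measure lborel K)"
    using tagged_division_of_finite[OF p] qp \<epsilon> by (intro sum_mono2) auto
  also have "\<dots> = \<epsilon> * (\<Sum>(x, K)\<in>p. measure lborel K)"
    by (simp add: sum_distrib_left case_prod_unfold)
  also have "\<dots> = \<epsilon> * (b - a)"
    using additive_content_tagged_division[of p a b] p ab by (simp add: case_prod_unfold)
  finally show ?thesis .
qed

text \<open>Tags where \<open>F\<close> is differentiable are handled by the chord
  estimate, the remaining tags by absolute continuity near the exceptional set.\<close>
theorem abs_cont_fundamental_theorem:
  fixes F f :: "real \<Rightarrow> 'a::real_normed_vector"
  assumes ab: "a < b" and ac: "abs_cont_on a b F" and negl: "negligible ({a..b} - D)"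
    and der: "\<And>t. t \<in> D \<Longrightarrow> (F has_vector_derivative f t) (at t within {a..b})"
  shows "((\<lambda>t. if t \<in> D then f t else 0) has_integral (F b - F a)) {a..b}"
  unfolding has_integral_factor_content_real
proof (intro allI impI)
  fix e :: real assume e: "e > 0"
  define g where "g t = (if t \<in> D then f t else 0)" for t
  have e': "e / 2 * (b - a) > 0" using e ab by simp
  obtain G where G: "open G" "{a..b} - D \<subseteq> G" and var: "\<And>p q. p tagged_division_of {a..b} \<Longrightarrow>
      q \<subseteq> p \<Longrightarrow> (\<And>x K. (x, K) \<in> q \<Longrightarrow> K \<subseteq> G) \<Longrightarrow>
      (\<Sum>(x, K)\<in>q. norm (F (Sup K) - F (Inf K))) \<le> e / 2 * (b - a)"
    by (rule abs_cont_on_tags_near_negligible[OF ac negl e']) blast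
  have "\<exists>d>0. x \<in> D \<longrightarrow> (\<forall>y\<in>{a..b}. norm (y - x) < d \<longrightarrow>
          norm (F y - F x - (y - x) *\<^sub>R f x) \<le> e / 2 * norm (y - x))" for x
  proof (cases "x \<in> D")
    case True
    then have "\<forall>\<epsilon>>0. \<exists>d>0. \<forall>y\<in>{a..b}. norm (y - x) < d \<longrightarrow>
        norm (F y - F x - (y - x) *\<^sub>R f x) \<le> \<epsilon> * norm (y - x)"
      using der unfolding has_vector_derivative_def has_derivative_within_alt by blast
    from this[rule_format, of "e / 2"] e show ?thesis by auto
  qed (auto intro: exI[of _ 1])
  then obtain d1 where d1: "\<And>x. 0 < d1 x" "\<And>x y. x \<in> D \<Longrightarrow> y \<in> {a..b} \<Longrightarrow> norm (y - x) < d1 x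
      \<Longrightarrow> norm (F y - F x - (y - x) *\<^sub>R f x) \<le> e / 2 * norm (y - x)"
    by metis
  have "\<exists>d>0. x \<in> G \<longrightarrow> ball x d \<subseteq> G" for x
    using G(1) open_contains_ball by blast
  then obtain d2 where d2: "\<And>x. 0 < d2 x" "\<And>x. x \<in> G \<Longrightarrow> ball x (d2 x) \<subseteq> G"
    by metis
  define \<gamma> where "\<gamma> x = ball x (if x \<in> D then d1 x else d2 x)" for x
  show "\<exists>\<gamma>. gauge \<gamma> \<and> (\<forall>p. p tagged_division_of {a..b} \<and> \<gamma> fine p \<longrightarrow>
      norm ((\<Sum>(x, K)\<in>p. measure lborel K *\<^sub>R g x) - (F b - F a)) \<le> e * measure lborel {a..b})"
    unfolding g_def[symmetric]
  proof (intro exI conjI allI impI)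
    show "gauge \<gamma>" using d1(1) d2(1) unfolding \<gamma>_def by (intro gauge_ball_dependent) auto
    fix p assume "p tagged_division_of {a..b} \<and> \<gamma> fine p"
    then have p: "p tagged_division_of {a..b}" and fine: "\<gamma> fine p" by auto
    define \<Delta> where "\<Delta> = (\<lambda>(x, K). measure lborel K *\<^sub>R g x - (F (Sup K) - F (Inf K)))"
    define pD where "pD = {(x, K) \<in> p. x \<in> D}"
    define pN where "pN = {(x, K) \<in> p. x \<notin> D}"
    have fin: "finite pD" "finite pN" using p unfolding pD_def pN_def by (auto intro: finite_subset)
    have "(\<Sum>(x, K)\<in>p. measure lborel K *\<^sub>R g x) - (F b - F a) = (\<Sum>y\<in>p. \<Delta> y)"
      using additive_tagged_division_1[OF less_imp_le[OF ab] p, of F]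
      by (simp add: \<Delta>_def split_def sum_subtractf)
    also have "\<dots> = (\<Sum>y\<in>pD. \<Delta> y) + (\<Sum>y\<in>pN. \<Delta> y)"
      using fin by (subst sum.union_disjoint[symmetric]) (auto simp: pD_def pN_def intro: sum.cong)
    finally have split: "(\<Sum>(x, K)\<in>p. measure lborel K *\<^sub>R g x) - (F b - F a)
        = (\<Sum>y\<in>pD. \<Delta> y) + (\<Sum>y\<in>pN. \<Delta> y)" .
    have "(\<Sum>y\<in>pD. \<Delta> y) = (\<Sum>(x, K)\<in>pD. measure lborel K *\<^sub>R f x - (F (Sup K) - F (Inf K)))"
      by (intro sum.cong) (auto simp: \<Delta>_def g_def pD_def)
    also have "norm \<dots> \<le> e / 2 * (b - a)"
    proof (rule derivative_tags_estimate[OF p])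
      fix x K y assume xK: "(x, K) \<in> pD" and y: "y \<in> K"
      then have xD: "x \<in> D" and xKp: "(x, K) \<in> p" by (auto simp: pD_def)
      have "y \<in> ball x (d1 x)" using fineD[OF fine xKp] xD y by (auto simp: \<gamma>_def)
      moreover have "y \<in> {a..b}" using tagged_division_ofD(3)[OF p xKp] y by blast
      ultimately show "norm (F y - F x - (y - x) *\<^sub>R f x) \<le> e / 2 * \<bar>y - x\<bar>"
        using d1(2)[OF xD, of y] by (simp add: dist_norm norm_minus_commute)
    qed (use e ab in \<open>auto simp: pD_def\<close>)
    finally have goodD: "norm (\<Sum>y\<in>pD. \<Delta> y) \<le> e / 2 * (b - a)" .
    have "norm (\<Sum>y\<in>pN. \<Delta> y) \<le> (\<Sum>(x, K)\<in>pN. norm (F (Sup K) - F (Inf K)))"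
      by (rule sum_norm_le) (auto simp: \<Delta>_def g_def pN_def norm_minus_commute)
    also have "\<dots> \<le> e / 2 * (b - a)"
    proof (rule var[OF p])
      fix x K assume xK: "(x, K) \<in> pN"
      then have xK: "(x, K) \<in> p" "x \<notin> D" by (auto simp: pN_def)
      then have "x \<in> {a..b}" using tagged_division_ofD(2,3)[OF p xK(1)] by blast
      with xK have "x \<in> G" "(x, K) \<in> p" "x \<notin> D" using G(2) by auto
      then show "K \<subseteq> G" using fineD[OF fine, of x K] d2(2)[of x] by (simp add: \<gamma>_def)
    qed (auto simp: pN_def)
    finally have goodN: "norm (\<Sum>y\<in>pN. \<Delta> y) \<le> e / 2 * (b - a)" .
    show "norm ((\<Sum>(x, K)\<in>p. measure lborel K *\<^sub>R g x) - (F b - F a)) \<le> e * measure lborel {a..b}"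
      unfolding split using norm_triangle_le[OF add_mono[OF goodD goodN]] ab by simp
  qed
qed

lemma difference_quotients_tendsto:
  fixes f :: "real \<Rightarrow> 'a::real_normed_vector"
  assumes der: "(f has_vector_derivative f') (at t within {a..b})" and t: "a \<le> t" "t < b"
  shows "(\<lambda>n. real (Suc n) *\<^sub>R (f (t + 1 / real (Suc n)) - f t)) \<longlonglongrightarrow> f'"
proof (rule LIMSEQ_I)
  fix e :: real assume e: "e > 0"
  have "\<forall>\<epsilon>>0. \<exists>d>0. \<forall>y\<in>{a..b}. norm (y - t) < d \<longrightarrow>
          norm (f y - f t - (y - t) *\<^sub>R f') \<le> \<epsilon> * norm (y - t)"
    using der unfolding has_vector_derivative_def has_derivative_within_alt by simp
  from this[rule_format, of "e / 2"] e obtain d where d: "d > 0"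
    "\<And>y. y \<in> {a..b} \<Longrightarrow> norm (y - t) < d \<Longrightarrow> norm (f y - f t - (y - t) *\<^sub>R f') \<le> e / 2 * norm (y - t)"
    by auto
  obtain n0 where n0: "inverse (real (Suc n0)) < min d (b - t)"
    using reals_Archimedean[of "min d (b - t)"] d t by auto
  show "\<exists>no. \<forall>n\<ge>no. norm (real (Suc n) *\<^sub>R (f (t + 1 / real (Suc n)) - f t) - f') < e"
  proof (intro exI allI impI)
    fix n assume n: "n \<ge> n0"
    define y where "y = t + 1 / real (Suc n)"
    have "1 / real (Suc n) \<le> inverse (real (Suc n0))" using n by (simp add: divide_simps)
    then have "y - t < min d (b - t)" using n0 by (simp add: y_def)
    moreover have yt: "y - t = 1 / real (Suc n)" "t < y" by (simp_all add: y_def)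
    ultimately have y: "y \<in> {a..b}" "norm (y - t) = 1 / real (Suc n)" "norm (y - t) < d"
      using t by auto
    have "real (Suc n) *\<^sub>R (f y - f t) - f' = real (Suc n) *\<^sub>R (f y - f t - (y - t) *\<^sub>R f')"
      by (simp add: y_def algebra_simps)
    then have "norm (real (Suc n) *\<^sub>R (f y - f t) - f')
        = real (Suc n) * norm (f y - f t - (y - t) *\<^sub>R f')" by simp
    also have "\<dots> \<le> real (Suc n) * (e / 2 * norm (y - t))"
      using d(2)[OF y(1,3)] by (intro mult_left_mono) auto
    also have "\<dots> = e / 2" using y(2) by (simp add: field_simps)
    also have "\<dots> < e" using e by simp
    finally show "norm (real (Suc n) *\<^sub>R (f (t + 1 / real (Suc n)) - f t) - f') < e"
      by (simp add: y_def)
  qed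
qed

text \<open>The derivative of a continuous function that is differentiable outside a negligible set is
  Lebesgue measurable: it is the a.e. limit of continuous difference quotients (of the function
  extended constantly outside \<open>[a, b]\<close>).\<close>
lemma vector_derivative_measurable:
  fixes f :: "real \<Rightarrow> 'a::euclidean_space"
  assumes cont: "continuous_on {a..b} f" and N: "negligible N"
    and diff: "\<And>t. t \<in> {a..b} - N \<Longrightarrow> f differentiable (at t within {a..b})"
  shows "(\<lambda>t. vector_derivative f (at t within {a..b})) measurable_on {a..b}"
proof -
  define fc where "fc t = f (max a (min b t))" for t
  have "continuous_on UNIV (\<lambda>t. max a (min b t))" by (intro continuous_intros)
  moreover have "range (\<lambda>t. max a (min b t)) \<subseteq> {a..b}" if "a \<le> b" using that by auto
  ultimately have fc: "continuous_on UNIV fc" if "a \<le> b"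
    unfolding fc_def using continuous_on_compose2[OF cont] that by blast
  define hs where "hs n t = real (Suc n) *\<^sub>R (fc (t + 1 / real (Suc n)) - fc t)" for n t
  show ?thesis
  proof (cases "a \<le> b")
    case False
    then show ?thesis by simp
  next
    case ab: True
    show ?thesis
    proof (rule measurable_on_limit)
      show "hs n measurable_on {a..b}" for n
      proof -
        have "continuous_on UNIV (hs n)"
          unfolding hs_def by (intro continuous_intros continuous_on_compose2[OF fc[OF ab]]) auto
        then have "continuous_on {a..b} (hs n)" by (rule continuous_on_subset) auto
        then show ?thesis
          by (simp add: measurable_on_iff_borel_measurable continuous_imp_measurable_on_sets_lebesgue)
      qed
      show "negligible (N \<union> {b})" using N by simp
      fix t assume t: "t \<in> {a..b} - (N \<union> {b})"
      then have "(f has_vector_derivative vector_derivative f (at t within {a..b})) (at t within {a..b})"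
        using diff vector_derivative_works by blast
      then have lim: "(\<lambda>n. real (Suc n) *\<^sub>R (f (t + 1 / real (Suc n)) - f t))
          \<longlonglongrightarrow> vector_derivative f (at t within {a..b})"
        using t by (intro difference_quotients_tendsto) auto
      have "eventually (\<lambda>n. 1 / real (Suc n) < b - t) sequentially"
        using t by (intro order_tendstoD(2)[OF LIMSEQ_Suc[OF lim_const_over_n]]) auto
      then have "eventually (\<lambda>n. real (Suc n) *\<^sub>R (f (t + 1 / real (Suc n)) - f t) = hs n t) sequentially"
      proof eventually_elim
        case (elim n)
        have "a \<le> t + 1 / real (Suc n)" using t by (auto intro: add_increasing2)
        then show ?case using elim t by (simp add: hs_def fc_def)
      qed
      with lim show "(\<lambda>n. hs n t) \<longlonglongrightarrow> vector_derivative f (at t within {a..b})"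
        by (rule Lim_transform_eventually)
    qed
  qed
qed

lemma bounded_ae_imp_absolutely_integrable:
  fixes f :: "real \<Rightarrow> 'b::euclidean_space"
  assumes fm: "f measurable_on {a..b}" and E: "negligible E"
    and bd: "\<And>t. t \<in> {a..b} - E \<Longrightarrow> norm (f t) \<le> B"
  shows "f absolutely_integrable_on {a..b}"
proof (rule measurable_bounded_by_integrable_imp_absolutely_integrable)
  show "f \<in> borel_measurable (lebesgue_on {a..b})"
    using fm by (simp add: measurable_on_iff_borel_measurable)
  show "(\<lambda>t. if t \<in> E then norm (f t) else B) integrable_on {a..b}"
    by (rule integrable_spike[OF integrable_const_ivl[of B a b] E]) auto
  show "norm (f t) \<le> (if t \<in> E then norm (f t) else B)" if "t \<in> {a..b}" for t
    using bd that by auto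
qed auto

lemma H_T_continuous: "\<phi> \<in> H_T T \<Longrightarrow> continuous_on {0..T} \<phi>"
  unfolding H_T_def using abs_cont_on_continuous by blast

lemma H_T_differentiable_ae:
  assumes "\<phi> \<in> H_T T"
  obtains N where "negligible N" "\<And>t. t \<in> {0..T} - N \<Longrightarrow> \<phi> differentiable (at t within {0..T})"
proof -
  have ae: "AE t in lebesgue. t \<in> {0..T} \<longrightarrow> \<phi> differentiable (at t within {0..T})"
    using assms unfolding H_T_def by auto
  obtain N where "N \<in> null_sets lebesgue"
    "\<And>t. t \<in> space lebesgue - N \<Longrightarrow> t \<in> {0..T} \<longrightarrow> \<phi> differentiable (at t within {0..T})"
    using AE_E3[OF ae] by blast
  then show ?thesis by (intro that[of N]) (auto simp: negligible_iff_null_sets)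
qed

lemma H_T_dpath_measurable:
  assumes "\<phi> \<in> H_T T"
  shows "dpath T \<phi> measurable_on {0..T}"
proof -
  obtain N where "negligible N" "\<And>t. t \<in> {0..T} - N \<Longrightarrow> \<phi> differentiable (at t within {0..T})"
    using H_T_differentiable_ae[OF assms] by blast
  from vector_derivative_measurable[OF H_T_continuous[OF assms] this]
  show ?thesis by (simp add: dpath_def[abs_def])
qed

text \<open>The pointwise energy inequality behind the whole argument: since \<open>\<nabla>V \<bottom> b\<close>,
  \<open>|d - c|\<^sup>2 = |d - b - \<nabla>V/2|\<^sup>2 + 2\<langle>\<nabla>V, d\<rangle>\<close>, so the power \<open>\<langle>\<nabla>V, d\<rangle>\<close> is at most half the
  action density.\<close>
lemma gradient_power_le_action_density:
  fixes G B d :: "'a::real_inner"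
  assumes "inner G B = 0"
  shows "inner G d \<le> (1/2) * (norm (d - (- (1/2) *\<^sub>R G + B)))\<^sup>2"
proof -
  have "(norm (d - (- (1/2) *\<^sub>R G + B)))\<^sup>2 - 2 * inner G d = (norm (d - (1/2) *\<^sub>R G - B))\<^sup>2"
    using assms
    by (simp add: power2_norm_eq_inner inner_diff_left inner_diff_right inner_add_left inner_add_right
        inner_commute algebra_simps)
  moreover have "(norm (d - (1/2) *\<^sub>R G - B))\<^sup>2 \<ge> 0" by simp
  ultimately show ?thesis by linarith
qed

text \<open>The action density of a path in \<open>H_T\<close> is integrable when the drift is continuous: it is
  dominated by \<open>2|\<phi>'|\<^sup>2 + 2 max |c(\<phi>)|\<^sup>2\<close>.\<close>
lemma action_density_integrable:
  fixes gV b :: "'a::euclidean_space \<Rightarrow> 'a"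
  assumes gVc: "continuous_on UNIV gV" and bc: "continuous_on UNIV b" and \<phi>: "\<phi> \<in> H_T T"
  shows "set_integrable lebesgue {0..T} (\<lambda>t. (norm (dpath T \<phi> t - cfield gV b (\<phi> t)))\<^sup>2)"
proof -
  have cont: "continuous_on {0..T} \<phi>" by (rule H_T_continuous[OF \<phi>])
  have cc: "continuous_on UNIV (cfield gV b)" unfolding cfield_def by (intro continuous_intros gVc bc)
  then have c\<phi>: "continuous_on {0..T} (\<lambda>t. cfield gV b (\<phi> t))"
    by (rule continuous_on_compose2[OF _ cont]) auto
  then obtain M where M: "\<And>t. t \<in> {0..T} \<Longrightarrow> norm (cfield gV b (\<phi> t)) \<le> M"
    using continuous_on_compact_bound[OF compact_Icc c\<phi>] by blast
  have sq: "(\<lambda>t. (norm (dpath T \<phi> t))\<^sup>2) integrable_on {0..T}"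
    using \<phi> set_lebesgue_integral_eq_integral(1) unfolding H_T_def by blast
  have "(\<lambda>t. (norm (dpath T \<phi> t - cfield gV b (\<phi> t)))\<^sup>2) \<in> borel_measurable (lebesgue_on {0..T})"
    using H_T_dpath_measurable[OF \<phi>] continuous_imp_measurable_on_sets_lebesgue[OF c\<phi>]
    by (simp add: measurable_on_iff_borel_measurable) measurable
  then show ?thesis
  proof (rule measurable_bounded_by_integrable_imp_absolutely_integrable)
    show "(\<lambda>t. 2 * (norm (dpath T \<phi> t))\<^sup>2 + 2 * M\<^sup>2) integrable_on {0..T}"
      using sq by (intro integrable_add integrable_cmul integrable_const_ivl) auto
    fix t assume t: "t \<in> {0..T}"
    have "norm (dpath T \<phi> t - cfield gV b (\<phi> t)) \<le> norm (dpath T \<phi> t) + M"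
      using norm_triangle_ineq4[of "dpath T \<phi> t" "cfield gV b (\<phi> t)"] M[OF t] by linarith
    then have "(norm (dpath T \<phi> t - cfield gV b (\<phi> t)))\<^sup>2 \<le> (norm (dpath T \<phi> t) + M)\<^sup>2"
      by (intro power_mono) auto
    also have "\<dots> \<le> 2 * (norm (dpath T \<phi> t))\<^sup>2 + 2 * M\<^sup>2"
      using sum_squares_bound[of "norm (dpath T \<phi> t)" M] by (simp add: power2_eq_square algebra_simps)
    finally show "norm ((norm (dpath T \<phi> t - cfield gV b (\<phi> t)))\<^sup>2) \<le> 2 * (norm (dpath T \<phi> t))\<^sup>2 + 2 * M\<^sup>2"
      by simp
  qed auto
qed

lemma gradient_lipschitz_on_cball:
  fixes V :: "'a::euclidean_space \<Rightarrow> real"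
  assumes V_grad: "\<And>z. (V has_derivative (\<lambda>h. inner (gV z) h)) (at z)"
    and gVc: "continuous_on UNIV gV"
  obtains L where "L > 0" "\<And>u v. u \<in> cball 0 R \<Longrightarrow> v \<in> cball 0 R \<Longrightarrow> norm (V u - V v) \<le> L * norm (u - v)"
proof -
  obtain G where G: "\<And>z. z \<in> cball 0 R \<Longrightarrow> norm (gV z) \<le> G"
    using continuous_on_compact_bound[OF compact_cball continuous_on_subset[OF gVc subset_UNIV]] by blast
  have "norm (V u - V v) \<le> (\<bar>G\<bar> + 1) * norm (u - v)" if uv: "u \<in> cball 0 R" "v \<in> cball 0 R" for u v
  proof (rule differentiable_bound[OF convex_cball _ _ uv])
    show "(V has_derivative (\<lambda>h. inner (gV z) h)) (at z within cball 0 R)" for z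
      by (rule has_derivative_at_withinI[OF V_grad])
    show "onorm (\<lambda>h. inner (gV z) h) \<le> \<bar>G\<bar> + 1" if "z \<in> cball 0 R" for z
    proof (rule onorm_le)
      fix h
      have "norm (inner (gV z) h) \<le> norm (gV z) * norm h" by (simp add: Cauchy_Schwarz_ineq2)
      also have "\<dots> \<le> (\<bar>G\<bar> + 1) * norm h" using G[OF that] by (intro mult_right_mono) auto
      finally show "norm (inner (gV z) h) \<le> (\<bar>G\<bar> + 1) * norm h" .
    qed
  qed
  then show ?thesis by (intro that[of "\<bar>G\<bar> + 1"]) auto
qed

text \<open>It integrates the pointwise inequality above, using the
  fundamental theorem of calculus for the absolutely continuous function \<open>V \<circ> \<phi>\<close>.\<close>
theorem energy_inequality:
  fixes V :: "'a::euclidean_space \<Rightarrow> real" and gV b :: "'a \<Rightarrow> 'a" and \<phi> :: "real \<Rightarrow> 'a"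
  assumes V_grad: "\<And>z. (V has_derivative (\<lambda>h. inner (gV z) h)) (at z)"
    and gVc: "continuous_on UNIV gV" and bc: "continuous_on UNIV b"
    and orth: "\<And>z. inner (gV z) (b z) = 0"
    and T: "T > 0" and \<phi>: "\<phi> \<in> H_T T"
  shows "V (\<phi> T) - V (\<phi> 0) \<le> (1/2) * (LINT t:{0..T}|lebesgue. (norm (dpath T \<phi> t - cfield gV b (\<phi> t)))\<^sup>2)"
proof -
  define g where "g t = (norm (dpath T \<phi> t - cfield gV b (\<phi> t)))\<^sup>2" for t
  define D where "D = {t \<in> {0..T}. \<phi> differentiable (at t within {0..T})}"
  define p where "p t = inner (gV (\<phi> t)) (dpath T \<phi> t)" for t
  have gint: "g absolutely_integrable_on {0..T}"
    unfolding g_def by (rule action_density_integrable[OF gVc bc \<phi>])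
  obtain N where N: "negligible N" "\<And>t. t \<in> {0..T} - N \<Longrightarrow> \<phi> differentiable (at t within {0..T})"
    using H_T_differentiable_ae[OF \<phi>] by blast
  have Dneg: "negligible ({0..T} - D)" by (rule negligible_subset[OF N(1)]) (auto simp: D_def N(2))
  \<comment> \<open>\<open>V \<circ> \<phi>\<close> is absolutely continuous, since \<open>V\<close> is Lipschitz on the compact range of \<open>\<phi>\<close>\<close>
  obtain R where R: "\<And>t. t \<in> {0..T} \<Longrightarrow> norm (\<phi> t) \<le> R"
    using continuous_on_compact_bound[OF compact_Icc H_T_continuous[OF \<phi>]] by blast
  obtain L where L: "L > 0" "\<And>u v. u \<in> cball 0 R \<Longrightarrow> v \<in> cball 0 R \<Longrightarrow> norm (V u - V v) \<le> L * norm (u - v)"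
    using gradient_lipschitz_on_cball[OF V_grad gVc] by blast
  have acV: "abs_cont_on 0 T (V \<circ> \<phi>)"
    using \<phi> L R unfolding H_T_def by (intro abs_cont_on_compose_lipschitz[of _ _ _ L]) auto
  have der: "((V \<circ> \<phi>) has_vector_derivative p t) (at t within {0..T})" if t: "t \<in> D" for t
  proof -
    have "(\<phi> has_vector_derivative dpath T \<phi> t) (at t within {0..T})"
      using t unfolding D_def dpath_def by (auto simp: vector_derivative_works)
    then have "((V \<circ> \<phi>) has_derivative (\<lambda>h. inner (gV (\<phi> t)) h) \<circ> (\<lambda>h. h *\<^sub>R dpath T \<phi> t))
        (at t within {0..T})"
      unfolding has_vector_derivative_def
      by (rule diff_chain_within) (rule has_derivative_at_withinI[OF V_grad])
    moreover have "(\<lambda>h. inner (gV (\<phi> t)) h) \<circ> (\<lambda>h. h *\<^sub>R dpath T \<phi> t) = (\<lambda>h. h *\<^sub>R p t)"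
      by (auto simp: p_def fun_eq_iff)
    ultimately show ?thesis by (simp add: has_vector_derivative_def)
  qed
  have ftc: "((\<lambda>t. if t \<in> D then p t else 0) has_integral (V (\<phi> T) - V (\<phi> 0))) {0..T}"
    using abs_cont_fundamental_theorem[OF T acV Dneg der] by simp
  have "V (\<phi> T) - V (\<phi> 0) \<le> integral {0..T} (\<lambda>t. (1/2) * g t)"
  proof (rule has_integral_le[OF ftc integrable_integral])
    show "(\<lambda>t. (1/2) * g t) integrable_on {0..T}"
      using integrable_cmul[OF set_lebesgue_integral_eq_integral(1)[OF gint], of "1/2"] by simp
    show "(if t \<in> D then p t else 0) \<le> (1/2) * g t" for t
      using gradient_power_le_action_density[OF orth[of "\<phi> t"], of "dpath T \<phi> t"]
      by (auto simp: p_def g_def cfield_def)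
  qed
  also have "\<dots> = (1/2) * (LINT t:{0..T}|lebesgue. g t)"
    using set_lebesgue_integral_eq_integral(2)[OF gint] by simp
  finally show ?thesis by (simp add: g_def)
qed

lemma radial_growth:
  fixes V :: "'a::euclidean_space \<Rightarrow> real" and gV :: "'a \<Rightarrow> 'a"
  assumes V_grad: "\<And>z. (V has_derivative (\<lambda>h. inner (gV z) h)) (at z)"
    and grow: "\<And>z. norm z \<ge> R \<Longrightarrow> inner (gV z) z / norm z \<ge> 1"
    and R: "R > 0" and u: "norm u = 1" and r: "R \<le> r"
  shows "V (R *\<^sub>R u) - R \<le> V (r *\<^sub>R u) - r"
proof -
  define h where "h s = V (s *\<^sub>R u) - s" for s
  have hd: "(h has_real_derivative (inner (gV (s *\<^sub>R u)) u - 1)) (at s)" for s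
  proof -
    have "((\<lambda>s. V (s *\<^sub>R u)) has_derivative (\<lambda>r. inner (gV (s *\<^sub>R u)) (r *\<^sub>R u))) (at s)"
      using diff_chain_at[OF has_derivative_scaleR_left[OF has_derivative_ident] V_grad]
      by (simp add: o_def)
    then have "((\<lambda>s. V (s *\<^sub>R u)) has_real_derivative (inner (gV (s *\<^sub>R u)) u)) (at s)"
      by (simp add: has_field_derivative_def mult_commute_abs)
    then show ?thesis unfolding h_def by (auto intro!: derivative_eq_intros)
  qed
  have "h R \<le> h r"
  proof (rule DERIV_nonneg_imp_increasing_open[OF r])
    show "continuous_on {R..r} h"
      using hd by (meson DERIV_continuous continuous_at_imp_continuous_on)
    fix s assume s: "R < s" "s < r"
    have "inner (gV (s *\<^sub>R u)) (s *\<^sub>R u) / norm (s *\<^sub>R u) = inner (gV (s *\<^sub>R u)) u"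
      using s R u by simp
    moreover have "inner (gV (s *\<^sub>R u)) (s *\<^sub>R u) / norm (s *\<^sub>R u) \<ge> 1"
      using grow[of "s *\<^sub>R u"] s u by auto
    ultimately show "\<exists>y. (h has_real_derivative y) (at s) \<and> 0 \<le> y"
      using hd[of s] by auto
  qed
  then show ?thesis by (simp add: h_def)
qed

text \<open>Coercivity of \<open>V\<close>: the radial growth condition \<open>\<langle>\<nabla>V(z), z\<rangle>/|z| \<rightarrow> \<infinity>\<close> forces
  \<open>|z| \<le> V(z) + B\<close>: compare \<open>V(z)\<close> with \<open>V\<close> on the sphere of radius \<open>R\<close> along the ray through \<open>z\<close>.\<close>
lemma coercive_lower_bound:
  fixes V :: "'a::euclidean_space \<Rightarrow> real" and gV :: "'a \<Rightarrow> 'a"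
  assumes V_grad: "\<And>z. (V has_derivative (\<lambda>h. inner (gV z) h)) (at z)"
    and V_growth: "filterlim (\<lambda>z. inner (gV z) z / norm z) at_top at_infinity"
  obtains B where "\<And>z. norm z \<le> V z + B"
proof -
  obtain R0 where R0: "\<And>z. norm z \<ge> R0 \<Longrightarrow> inner (gV z) z / norm z \<ge> 1"
    using V_growth unfolding filterlim_at_top eventually_at_infinity by blast
  define R where "R = max R0 1"
  have R: "R > 0" "\<And>z. norm z \<ge> R \<Longrightarrow> inner (gV z) z / norm z \<ge> 1"
    using R0 unfolding R_def by auto
  have Vc: "continuous_on UNIV V"
    using V_grad by (meson continuous_at_imp_continuous_on has_derivative_continuous)
  obtain M where M: "\<And>z. z \<in> cball 0 R \<Longrightarrow> \<bar>V z\<bar> \<le> M"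
    using continuous_on_compact_bound[OF compact_cball continuous_on_subset[OF Vc subset_UNIV]]
    unfolding real_norm_def by blast
  have "norm z \<le> V z + (R + M)" for z
  proof (cases "norm z \<le> R")
    case True
    then show ?thesis using M[of z] by auto
  next
    case False
    define u where "u = z /\<^sub>R norm z"
    have "z \<noteq> 0" using False R by auto
    then have u: "norm u = 1" "norm z *\<^sub>R u = z" by (simp_all add: u_def)
    have "V (R *\<^sub>R u) - R \<le> V z - norm z"
      using radial_growth[OF V_grad R(2) R(1) u(1), of "norm z"] False u(2) by simp
    moreover have "\<bar>V (R *\<^sub>R u)\<bar> \<le> M" using M[of "R *\<^sub>R u"] R u by simp
    ultimately show ?thesis by linarith
  qed
  then show ?thesis by (rule that)
qed

definition segment_work :: "('a::euclidean_space \<Rightarrow> 'a) \<Rightarrow> 'a \<Rightarrow> 'a \<Rightarrow> real" where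
  "segment_work b P v = integral {0..1} (\<lambda>s. inner (b (P + s *\<^sub>R v)) v)"

lemma segment_work_has_integral:
  assumes bc: "continuous_on UNIV b"
  shows "((\<lambda>s. inner (b (P + s *\<^sub>R v)) v) has_integral segment_work b P v) {0..1}"
proof -
  have "continuous_on {0..1} (\<lambda>s. inner (b (P + s *\<^sub>R v)) v)"
    by (intro continuous_intros continuous_on_compose2[OF bc]) auto
  then show ?thesis unfolding segment_work_def
    by (intro integrable_integral integrable_continuous_real)
qed

lemma segment_work_bound:
  assumes bc: "continuous_on UNIV b" and M: "\<And>z. norm (b z) \<le> M"
  shows "\<bar>segment_work b P v\<bar> \<le> M * norm v"
proof -
  have "norm (segment_work b P v) \<le> (M * norm v) * measure lborel (cbox (0::real) 1)"
  proof (rule has_integral_bound[OF _ segment_work_has_integral[OF bc, unfolded box_real(2)[symmetric]]])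
    have "0 \<le> M" using M[of 0] norm_ge_zero[of "b 0"] by linarith
    then show "0 \<le> M * norm v" by simp
    fix s show "norm (inner (b (P + s *\<^sub>R v)) v) \<le> M * norm v"
      using Cauchy_Schwarz_ineq2[of "b (P + s *\<^sub>R v)" v] M[of "P + s *\<^sub>R v"]
      by (simp add: mult_right_mono order_trans)
  qed
  then show ?thesis by simp
qed

lemma segment_work_reverse:
  assumes bc: "continuous_on UNIV b"
  shows "segment_work b (P + v) (- v) = - segment_work b P v"
proof -
  define f where "f = (\<lambda>s. inner (b (P + s *\<^sub>R v)) v)"
  have h1: "(f has_integral segment_work b P v) {0..1}"
    using segment_work_has_integral[OF bc] by (simp add: f_def)
  have h2: "((\<lambda>x. f (- x)) has_integral segment_work b P v) {-1..0}"
    using has_integral_reflect_lemma_real[OF h1] by simp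
  have h3: "((\<lambda>x. f (- x)) \<circ> (+) (-1) has_integral segment_work b P v) (cbox 0 1)"
    using has_integral_shift_cbox_iff[of "\<lambda>x. f (- x)" "-1" "segment_work b P v" 0 1] h2 by simp
  have h4: "((\<lambda>s. - f (1 - s)) has_integral - segment_work b P v) {0..1}"
    using has_integral_neg[OF h3] by (simp add: o_def)
  have "segment_work b (P + v) (- v) = integral {0..1} (\<lambda>s. - f (1 - s))"
    unfolding segment_work_def f_def by (intro integral_cong) (simp add: algebra_simps)
  also have "\<dots> = - segment_work b P v" using h4 by (rule integral_unique)
  finally show ?thesis .
qed

lemma segment_work_linearization:
  assumes bc: "continuous_on UNIV b" and e: "e > 0"
  obtains d where "d > 0" "\<And>h. norm h < d \<Longrightarrow> \<bar>segment_work b z h - inner (b z) h\<bar> \<le> e * norm h"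
proof -
  have "isCont b z" using bc by (simp add: continuous_on_eq_continuous_at)
  then obtain d where d: "d > 0" "\<And>w. dist w z < d \<Longrightarrow> dist (b w) (b z) < e"
    unfolding continuous_at_eps_delta using e by blast
  have "\<bar>segment_work b z h - inner (b z) h\<bar> \<le> e * norm h" if h: "norm h < d" for h
  proof -
    have "((\<lambda>s. inner (b (z + s *\<^sub>R h)) h - inner (b z) h) has_integral
        (segment_work b z h - inner (b z) h)) (cbox 0 1)"
      using has_integral_diff[OF segment_work_has_integral[OF bc] has_integral_const_real[of "inner (b z) h" 0 1]]
      by simp
    then have "norm (segment_work b z h - inner (b z) h) \<le> (e * norm h) * measure lborel (cbox (0::real) 1)"
    proof (rule has_integral_bound[rotated])
      fix s :: real assume s: "s \<in> cbox 0 1"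
      have "dist (z + s *\<^sub>R h) z = \<bar>s\<bar> * norm h" by (simp add: dist_norm)
      also have "\<dots> \<le> norm h" using s by (auto intro: mult_left_le_one_le)
      finally have "norm (b (z + s *\<^sub>R h) - b z) \<le> e"
        using d(2)[of "z + s *\<^sub>R h"] h by (simp add: dist_norm)
      then have "\<bar>inner (b (z + s *\<^sub>R h) - b z) h\<bar> \<le> e * norm h"
        using Cauchy_Schwarz_ineq2[of "b (z + s *\<^sub>R h) - b z" h] by (meson mult_right_mono norm_ge_zero order_trans)
      then show "norm (inner (b (z + s *\<^sub>R h)) h - inner (b z) h) \<le> e * norm h"
        by (simp add: inner_diff_left)
    qed (use e in simp)
    then show ?thesis by simp
  qed
  with d(1) show ?thesis by (rule that)
qed

definition triangle_circulation :: "('a::euclidean_space \<Rightarrow> 'a) \<Rightarrow> 'a \<Rightarrow> 'a \<Rightarrow> real" where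
  "triangle_circulation b z h = segment_work b 0 z + segment_work b z h + segment_work b (z + h) (- (z + h))"

lemma triangle_circulation_reverse:
  assumes bc: "continuous_on UNIV b"
  shows "triangle_circulation b (z + h) (- h) = - triangle_circulation b z h"
  using segment_work_reverse[OF bc, of z h] segment_work_reverse[OF bc, of 0 z]
    segment_work_reverse[OF bc, of 0 "z + h"]
  by (simp add: triangle_circulation_def)

text \<open>A continuous field without potential has a triangle with nonzero circulation: otherwise
  \<open>U(z) = segment_work b 0 z\<close> is additive along segments and hence a potential of \<open>b\<close>.\<close>
lemma nonconservative_triangle:
  fixes b :: "'a::euclidean_space \<Rightarrow> 'a"
  assumes bc: "continuous_on UNIV b"
    and nc: "\<not> (\<exists>U :: 'a \<Rightarrow> real. \<forall>z. (U has_derivative (\<lambda>h. inner (b z) h)) (at z))"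
  obtains z h where "triangle_circulation b z h \<noteq> 0"
proof (rule ccontr)
  assume "\<not> thesis"
  then have all0: "\<And>z h. triangle_circulation b z h = 0" using that by blast
  define U where "U z = segment_work b 0 z" for z
  have Ustep: "U (z + h) - U z = segment_work b z h" for z h
    using all0[of z h] segment_work_reverse[OF bc, of 0 "z + h"]
    by (simp add: U_def triangle_circulation_def)
  have "(U has_derivative (\<lambda>h. inner (b z) h)) (at z)" for z
    unfolding has_derivative_at_alt
  proof (intro conjI allI impI)
    show "bounded_linear (\<lambda>h. inner (b z) h)" by (rule bounded_linear_inner_right)
    fix e :: real assume "e > 0"
    then obtain d where d: "d > 0"
      "\<And>h. norm h < d \<Longrightarrow> \<bar>segment_work b z h - inner (b z) h\<bar> \<le> e * norm h"
      using segment_work_linearization[OF bc] by blast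
    show "\<exists>d>0. \<forall>y. norm (y - z) < d \<longrightarrow> norm (U y - U z - inner (b z) (y - z)) \<le> e * norm (y - z)"
    proof (intro exI[of _ d] conjI allI impI)
      fix y assume "norm (y - z) < d"
      then have "\<bar>segment_work b z (y - z) - inner (b z) (y - z)\<bar> \<le> e * norm (y - z)" by (rule d(2))
      moreover have "U y - U z = segment_work b z (y - z)" using Ustep[of z "y - z"] by simp
      ultimately show "norm (U y - U z - inner (b z) (y - z)) \<le> e * norm (y - z)" by simp
    qed (rule d(1))
  qed
  then show False using nc by blast
qed

definition polygon_pos :: "(int \<Rightarrow> 'a::real_normed_vector) \<Rightarrow> real \<Rightarrow> 'a" where
  "polygon_pos p u = p \<lfloor>u\<rfloor> + (u - of_int \<lfloor>u\<rfloor>) *\<^sub>R (p (\<lfloor>u\<rfloor> + 1) - p \<lfloor>u\<rfloor>)"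

definition polygon_vel :: "(int \<Rightarrow> 'a::real_normed_vector) \<Rightarrow> real \<Rightarrow> 'a" where
  "polygon_vel p u = p (\<lfloor>u\<rfloor> + 1) - p \<lfloor>u\<rfloor>"

lemma polygon_pos_on_unit:
  assumes "of_int j \<le> u" "u \<le> of_int j + 1"
  shows "polygon_pos p u = p j + (u - of_int j) *\<^sub>R (p (j+1) - p j)"
proof (cases "u = of_int j + 1")
  case True
  then have "\<lfloor>u\<rfloor> = j + 1" by simp
  then show ?thesis using True by (simp add: polygon_pos_def algebra_simps)
next
  case False
  then have "\<lfloor>u\<rfloor> = j" using assms by (intro floor_unique) auto
  then show ?thesis by (simp add: polygon_pos_def)
qed

lemma polygon_vel_on_unit:
  assumes "of_int j \<le> u" "u < of_int j + 1"
  shows "polygon_vel p u = p (j+1) - p j"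
proof -
  have "\<lfloor>u\<rfloor> = j" using assms by (intro floor_unique) auto
  then show ?thesis by (simp add: polygon_vel_def)
qed

lemma polygon_pos_continuous_unit: "continuous_on {of_int j..of_int j + 1} (polygon_pos p)"
proof -
  have "continuous_on {of_int j..of_int j + 1} (\<lambda>u. p j + (u - of_int j) *\<^sub>R (p (j+1) - p j))"
    by (intro continuous_intros)
  then show ?thesis
    by (rule continuous_on_eq) (auto simp: polygon_pos_on_unit)
qed

lemma polygon_pos_continuous: "continuous_on UNIV (polygon_pos p)"
proof -
  have "isCont (polygon_pos p) u" for u
  proof -
    define j where "j = \<lfloor>u\<rfloor>"
    have "continuous_on ({of_int (j-1)..of_int (j-1) + 1} \<union> {of_int j..of_int j + 1}) (polygon_pos p)"
      by (intro continuous_on_closed_Un polygon_pos_continuous_unit) auto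
    moreover have "{of_int (j-1)..of_int (j-1) + 1} \<union> {of_int j..of_int j + 1} = {of_int j - 1..of_int j + 1::real}"
      by auto
    ultimately have c: "continuous_on {of_int j - 1..of_int j + 1::real} (polygon_pos p)" by simp
    have "u \<in> interior {of_int j - 1..of_int j + 1::real}"
      unfolding interior_atLeastAtMost_real j_def greaterThanLessThan_iff
    proof -
      have "real_of_int \<lfloor>u\<rfloor> \<le> u" "u < real_of_int \<lfloor>u\<rfloor> + 1" using floor_correct[of u] by auto
      then show "real_of_int \<lfloor>u\<rfloor> - 1 < u \<and> u < real_of_int \<lfloor>u\<rfloor> + 1" by linarith
    qed
    then show ?thesis by (rule continuous_on_interior[OF c])
  qed
  then show ?thesis by (simp add: continuous_at_imp_continuous_on)
qed

lemma polygon_pos_derivative: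
  assumes "u \<notin> \<int>"
  shows "(polygon_pos p has_vector_derivative polygon_vel p u) (at u)"
proof -
  define j where "j = \<lfloor>u\<rfloor>"
  have ju: "of_int j < u" "u < of_int j + 1"
    using assms unfolding j_def
    using floor_correct[of u] by (metis Ints_of_int order_le_less) (use floor_correct[of u] in simp)
  have d: "((\<lambda>u. p j + (u - of_int j) *\<^sub>R (p (j+1) - p j)) has_vector_derivative (p (j+1) - p j)) (at u)"
    by (auto intro!: derivative_eq_intros)
  show ?thesis
  proof (rule has_vector_derivative_transform_within_open[OF _ _ _ , of _ _ _ "{of_int j<..<of_int j + 1}"])
    show "((\<lambda>u. p j + (u - of_int j) *\<^sub>R (p (j+1) - p j)) has_vector_derivative polygon_vel p u) (at u)"
      using d polygon_vel_on_unit[of j u p] ju by simp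
  qed (use ju in \<open>auto intro: polygon_pos_on_unit[symmetric]\<close>)
qed

definition polygon_power :: "('a::euclidean_space \<Rightarrow> 'a) \<Rightarrow> (int \<Rightarrow> 'a) \<Rightarrow> real \<Rightarrow> real" where
  "polygon_power b p u = inner (b (polygon_pos p u)) (polygon_vel p u)"

definition edge_work :: "('a::euclidean_space \<Rightarrow> 'a) \<Rightarrow> (int \<Rightarrow> 'a) \<Rightarrow> int \<Rightarrow> real" where
  "edge_work b p j = segment_work b (p j) (p (j + 1) - p j)"

text \<open>Properties of a closed polygon with three vertices, i.e. a \<open>3\<close>-periodic vertex sequence.\<close>
lemma periodic_shift:
  fixes p :: "int \<Rightarrow> 'a" and j k :: int
  assumes pper: "\<And>j. p j = p (j mod 3)"
  shows "p (j + 3 * k) = p j"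
  by (subst pper, subst (2) pper) simp

lemma polygon_vel_bound:
  assumes pper: "\<And>j. p j = p (j mod 3)"
  shows "norm (polygon_vel p u) \<le> norm (p 1 - p 0) + norm (p 2 - p 1) + norm (p 0 - p 2)"
proof -
  define j where "j = \<lfloor>u\<rfloor>"
  have "polygon_vel p u = p ((j mod 3 + 1) mod 3) - p (j mod 3)"
    unfolding polygon_vel_def j_def[symmetric]
    by (subst pper, subst (2) pper) (simp add: mod_add_left_eq)
  moreover have "j mod 3 = 0 \<or> j mod 3 = 1 \<or> j mod 3 = 2" by presburger
  ultimately show ?thesis by auto
qed

lemma polygon_pos_bound:
  assumes pper: "\<And>j. p j = p (j mod 3)"
  shows "norm (polygon_pos p u) \<le> norm (p 0) + norm (p 1) + norm (p 2)"
proof -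
  define j where "j = \<lfloor>u\<rfloor>"
  define t where "t = u - of_int j"
  have fl: "of_int \<lfloor>u\<rfloor> \<le> u" "u < of_int \<lfloor>u\<rfloor> + 1" using floor_correct[of u] by auto
  have t: "0 \<le> t" "t \<le> 1" unfolding t_def j_def using fl by linarith+
  have pb: "norm (p i) \<le> norm (p 0) + norm (p 1) + norm (p 2)" for i
  proof -
    have "i mod 3 = 0 \<or> i mod 3 = 1 \<or> i mod 3 = 2" by presburger
    then show ?thesis by (subst pper) auto
  qed
  have "polygon_pos p u = (1 - t) *\<^sub>R p j + t *\<^sub>R p (j + 1)"
    unfolding polygon_pos_def j_def[symmetric] t_def[symmetric] by (simp add: algebra_simps)
  then have "norm (polygon_pos p u) \<le> (1 - t) * norm (p j) + t * norm (p (j + 1))"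
    using t by (metis abs_of_nonneg diff_ge_0_iff_ge norm_scaleR norm_triangle_ineq order_trans
        add_mono order_refl)
  also have "\<dots> \<le> (1 - t) * (norm (p 0) + norm (p 1) + norm (p 2)) + t * (norm (p 0) + norm (p 1) + norm (p 2))"
    using t pb by (intro add_mono mult_left_mono) auto
  also have "\<dots> = norm (p 0) + norm (p 1) + norm (p 2)" by (simp add: algebra_simps)
  finally show ?thesis .
qed

lemma polygon_pos_lipschitz:
  fixes p :: "int \<Rightarrow> 'a::euclidean_space"
  assumes L: "\<And>u. norm (polygon_vel p u) \<le> L"
  shows "norm (polygon_pos p v - polygon_pos p u) \<le> L * \<bar>v - u\<bar>"
proof -
  have main: "norm (polygon_pos p v - polygon_pos p u) \<le> L * (v - u)" if uv: "u \<le> v" for u v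
  proof -
    have fin: "finite {x \<in> {u..v}. x \<in> \<int>}"
    proof (rule finite_subset[of _ "of_int ` {\<lfloor>u\<rfloor>..\<lceil>v\<rceil>}"])
      show "{x \<in> {u..v}. x \<in> \<int>} \<subseteq> of_int ` {\<lfloor>u\<rfloor>..\<lceil>v\<rceil>}"
      proof
        fix x assume "x \<in> {x \<in> {u..v}. x \<in> \<int>}"
        then obtain n where n: "x = of_int n" "u \<le> of_int n" "of_int n \<le> v" by (auto elim: Ints_cases)
        then have "\<lfloor>u\<rfloor> \<le> n" "n \<le> \<lceil>v\<rceil>" by (auto simp: floor_le_iff le_ceiling_iff)
        then show "x \<in> of_int ` {\<lfloor>u\<rfloor>..\<lceil>v\<rceil>}" using n by auto
      qed
    qed auto
    have "(polygon_vel p has_integral (polygon_pos p v - polygon_pos p u)) {u..v}"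
    proof (rule fundamental_theorem_of_calculus_interior_strong[OF fin uv])
      show "continuous_on {u..v} (polygon_pos p)" using polygon_pos_continuous continuous_on_subset by blast
      fix x assume "x \<in> {u<..<v} - {x \<in> {u..v}. x \<in> \<int>}"
      then have "x \<notin> \<int>" by auto
      then show "(polygon_pos p has_vector_derivative polygon_vel p x) (at x)" by (rule polygon_pos_derivative)
    qed
    moreover have L0: "0 \<le> L" using L[of 0] norm_ge_zero order_trans by blast
    ultimately have "norm (polygon_pos p v - polygon_pos p u) \<le> L * measure lborel (cbox u v)"
      using has_integral_bound[of L "polygon_vel p" "polygon_pos p v - polygon_pos p u" u v] L by simp
    then show ?thesis using uv by simp
  qed
  show ?thesis
  proof (cases "u \<le> v")
    case True then show ?thesis using main[OF True] by simp
  next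
    case False
    then have "norm (polygon_pos p u - polygon_pos p v) \<le> L * (u - v)" using main[of v u] by simp
    then show ?thesis using False by (simp add: norm_minus_commute)
  qed
qed

lemma polygon_power_integral_unit:
  assumes bc: "continuous_on UNIV b"
  shows "(polygon_power b p has_integral edge_work b p j) {of_int j..of_int j + 1}"
proof -
  define v where "v = p (j + 1) - p j"
  define g where "g = (\<lambda>u. inner (b (p j + (u - of_int j) *\<^sub>R v)) v)"
  have "((\<lambda>s. inner (b (p j + s *\<^sub>R v)) v) has_integral edge_work b p j) (cbox 0 1)"
    using segment_work_has_integral[OF bc] by (simp add: edge_work_def v_def)
  moreover have "(\<lambda>s. inner (b (p j + s *\<^sub>R v)) v) = g \<circ> (+) (of_int j)"
    by (simp add: g_def o_def fun_eq_iff)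
  ultimately have "(g has_integral edge_work b p j) (cbox (0 + of_int j) (1 + of_int j))"
    using has_integral_shift_cbox_iff by metis
  then have g: "(g has_integral edge_work b p j) {of_int j..of_int j + 1}" by (simp add: add.commute)
  show ?thesis
  proof (rule has_integral_spike[OF _ _ g])
    show "negligible {of_int j, of_int j + 1::real}" by simp
    fix u assume "u \<in> {of_int j..of_int j + 1} - {of_int j, of_int j + 1::real}"
    then have u: "of_int j \<le> u" "u < of_int j + 1" "u \<le> of_int j + 1" by auto
    show "polygon_power b p u = g u"
      unfolding polygon_power_def g_def v_def by (simp add: polygon_pos_on_unit[OF u(1) u(3)] polygon_vel_on_unit[OF u(1) u(2)])
  qed
qed

lemma polygon_power_integral_nat:
  assumes bc: "continuous_on UNIV b"
  shows "(polygon_power b p has_integral (\<Sum>i<n. edge_work b p (int i))) {0..real n}"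
proof (induction n)
  case 0
  then show ?case using has_integral_refl(1)[of "polygon_power b p" 0] by simp
next
  case (Suc n)
  have "(polygon_power b p has_integral edge_work b p (int n)) {real n..real n + 1}"
    using polygon_power_integral_unit[OF bc, of p "int n"] by simp
  then have "(polygon_power b p has_integral (\<Sum>i<n. edge_work b p (int i)) + edge_work b p (int n)) {0..real n + 1}"
    using has_integral_combine[of 0 "real n" "real n + 1", OF _ _ Suc.IH] by simp
  then show ?case by (simp add: add.commute)
qed

lemma polygon_power_integrable:
  assumes bc: "continuous_on UNIV b"
  shows "polygon_power b p integrable_on {0..\<theta>}"
proof (cases "\<theta> \<ge> 0")
  case True
  have "polygon_power b p integrable_on {0..real (nat \<lceil>\<theta>\<rceil>)}" using polygon_power_integral_nat[OF bc] by blast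
  then show ?thesis
    by (rule integrable_subinterval_real) (use True in \<open>auto simp: real_nat_ceiling_ge\<close>)
next
  case False
  then have "{0..\<theta>} = {}" by auto
  then show ?thesis by (simp add: integrable_on_empty)
qed

lemma edge_work_sum_periodic:
  assumes pper: "\<And>j. p j = p (j mod 3)"
  shows "(\<Sum>i<3*m. edge_work b p (int i)) = real m * (edge_work b p 0 + edge_work b p 1 + edge_work b p 2)"
proof (induction m)
  case 0 then show ?case by simp
next
  case (Suc m)
  have w: "edge_work b p (int (3*m + r)) = edge_work b p (int r)" for r
  proof -
    have "int (3*m + r) = int r + 3 * int m" by simp
    then show ?thesis unfolding edge_work_def
      using periodic_shift[where p=p, OF pper, of "int r" "int m"] periodic_shift[where p=p, OF pper, of "int r + 1" "int m"]
      by (simp add: algebra_simps)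
  qed
  have e3: "3 * Suc m = Suc (Suc (Suc (3 * m)))" by simp
  have "(\<Sum>i<3 * Suc m. edge_work b p (int i)) = (\<Sum>i<3*m. edge_work b p (int i))
      + edge_work b p (int (3*m)) + edge_work b p (int (Suc (3*m))) + edge_work b p (int (Suc (Suc (3*m))))"
    unfolding e3 sum.lessThan_Suc by simp
  also have "\<dots> = (\<Sum>i<3*m. edge_work b p (int i))
      + edge_work b p (int (3*m + 0)) + edge_work b p (int (3*m + 1)) + edge_work b p (int (3*m + 2))"
    by simp
  also have "\<dots> = (\<Sum>i<3*m. edge_work b p (int i)) + edge_work b p 0 + edge_work b p 1 + edge_work b p 2"
    unfolding w by simp
  finally
  have "(\<Sum>i<3 * Suc m. edge_work b p (int i)) = (\<Sum>i<3*m. edge_work b p (int i)) + edge_work b p 0 + edge_work b p 1 + edge_work b p 2" .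
  then show ?case using Suc by (simp add: algebra_simps)
qed

text \<open>Intermediate value argument: a work \<open>A\<close> of the same sign as the circulation \<open>\<kappa> \<noteq> 0\<close> is
  attained by running around the triangle for a time \<open>\<theta> \<le> 3 (A/\<kappa> + 1)\<close>.\<close>
lemma polygon_power_integral_reaches:
  assumes bc: "continuous_on UNIV b" and pper: "\<And>j. p j = p (j mod 3)"
    and \<kappa>: "\<kappa> = edge_work b p 0 + edge_work b p 1 + edge_work b p 2" "\<kappa> \<noteq> 0" and A: "A / \<kappa> \<ge> 0"
  shows "\<exists>\<theta>. 0 \<le> \<theta> \<and> \<theta> \<le> 3 * (A / \<kappa> + 1) \<and> integral {0..\<theta>} (polygon_power b p) = A"
proof -
  define m where "m = nat \<lceil>A / \<kappa>\<rceil>"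
  have m1: "A / \<kappa> \<le> real m" unfolding m_def by (simp add: real_nat_ceiling_ge)
  have m2: "real m \<le> A / \<kappa> + 1" unfolding m_def using A by (simp add: of_nat_nat ceiling_correct[of "A/\<kappa>"] less_imp_le)
  define G where "G \<theta> = integral {0..\<theta>} (polygon_power b p)" for \<theta>
  have G0: "G 0 = 0" by (simp add: G_def)
  have "G (real (3*m)) = real m * \<kappa>"
    unfolding G_def using integral_unique[OF polygon_power_integral_nat[OF bc, of p "3*m"]] edge_work_sum_periodic[where p=p and b=b and m=m, OF pper] \<kappa>(1)
    by (simp add: mult.commute)
  then have G3: "G (3 * real m) = real m * \<kappa>" by simp
  have Gc: "continuous_on {0..3 * real m} G"
    unfolding G_def by (rule indefinite_integral_continuous_1[OF polygon_power_integrable[OF bc]])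
  have "\<exists>\<theta>\<ge>0. \<theta> \<le> 3 * real m \<and> G \<theta> = A"
  proof (cases "\<kappa> > 0")
    case True
    then have "A \<ge> 0" using A by (simp add: zero_le_divide_iff)
    moreover have "A \<le> real m * \<kappa>" using m1 True by (simp add: divide_le_eq)
    ultimately show ?thesis using G0 G3 by (intro IVT'[OF _ _ _ Gc]) auto
  next
    case False
    then have neg: "\<kappa> < 0" using \<kappa>(2) by simp
    then have "A \<le> 0" using A by (simp add: zero_le_divide_iff)
    moreover have "real m * \<kappa> \<le> A" using m1 neg by (simp add: divide_le_eq)
    ultimately show ?thesis using G0 G3 by (intro IVT2'[OF _ _ _ Gc]) auto
  qed
  then obtain \<theta> where "0 \<le> \<theta>" "\<theta> \<le> 3 * real m" "G \<theta> = A" by blast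
  then show ?thesis using m2 by (intro exI[of _ \<theta>]) (auto simp: G_def)
qed


definition triangle_loop :: "'a::real_normed_vector \<Rightarrow> 'a \<Rightarrow> int \<Rightarrow> 'a" where
  "triangle_loop z h j = (if j mod 3 = 0 then 0 else if j mod 3 = 1 then z else z + h)"

lemma triangle_loop_periodic: "triangle_loop z h j = triangle_loop z h (j mod 3)"
  by (simp add: triangle_loop_def)

lemma triangle_loop_zero: "triangle_loop z h 0 = 0"
  by (simp add: triangle_loop_def)

lemma triangle_loop_circulation:
  "edge_work b (triangle_loop z h) 0 + edge_work b (triangle_loop z h) 1 + edge_work b (triangle_loop z h) 2
    = triangle_circulation b z h"
  by (simp add: edge_work_def triangle_loop_def triangle_circulation_def)

lemma lipschitz_path_in_H_T:
  fixes \<psi> v :: "real \<Rightarrow> 'a::euclidean_space"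
  assumes T: "T > 0" and L: "L \<ge> 0"
    and lip: "\<And>s t. s \<in> {0..T} \<Longrightarrow> t \<in> {0..T} \<Longrightarrow> norm (\<psi> s - \<psi> t) \<le> L * \<bar>s - t\<bar>"
    and N: "negligible N"
    and der: "\<And>t. t \<in> {0..T} - N \<Longrightarrow> (\<psi> has_vector_derivative v t) (at t within {0..T})"
    and vL: "\<And>t. norm (v t) \<le> L"
  shows "\<psi> \<in> H_T T" and "\<And>t. t \<in> {0..T} - N \<Longrightarrow> dpath T \<psi> t = v t"
proof -
  have ac: "abs_cont_on 0 T \<psi>" by (rule lipschitz_imp_abs_cont_on[OF L lip])
  show dp: "dpath T \<psi> t = v t" if t: "t \<in> {0..T} - N" for t
    unfolding dpath_def using vector_derivative_within_closed_interval[OF T] der[OF t] t by auto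
  have diff: "\<psi> differentiable (at t within {0..T})" if "t \<in> {0..T} - N" for t
    using der[OF that] by (rule differentiableI_vector)
  have ae: "AE t in lebesgue. t \<in> {0..T} \<longrightarrow> \<psi> differentiable (at t within {0..T})"
  proof (rule AE_I')
    show "N \<in> null_sets lebesgue" using N by (simp add: negligible_iff_null_sets)
  qed (use diff in auto)
  have "dpath T \<psi> measurable_on {0..T}"
    using vector_derivative_measurable[OF abs_cont_on_continuous[OF ac] N diff]
    by (simp add: dpath_def[abs_def])
  then have "(\<lambda>t. (norm (dpath T \<psi> t))\<^sup>2) measurable_on {0..T}"
    by (simp add: measurable_on_iff_borel_measurable) measurable
  then have "set_integrable lebesgue {0..T} (\<lambda>t. (norm (dpath T \<psi> t))\<^sup>2)"
  proof (rule bounded_ae_imp_absolutely_integrable[OF _ N])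
    fix t assume "t \<in> {0..T} - N"
    then have "(norm (dpath T \<psi> t))\<^sup>2 \<le> L\<^sup>2" using dp vL[of t] by (simp add: power_mono)
    then show "norm ((norm (dpath T \<psi> t))\<^sup>2) \<le> L\<^sup>2" by simp
  qed
  with ac ae show "\<psi> \<in> H_T T" unfolding H_T_def by blast
qed

definition competitor :: "'a::real_normed_vector \<Rightarrow> (int \<Rightarrow> 'a) \<Rightarrow> real \<Rightarrow> real \<Rightarrow> 'a" where
  "competitor x p \<omega> t = (if t \<le> 1 then (1 - t) *\<^sub>R x else polygon_pos p (\<omega> * (t - 1)))"

definition competitor_vel :: "'a::real_normed_vector \<Rightarrow> (int \<Rightarrow> 'a) \<Rightarrow> real \<Rightarrow> real \<Rightarrow> 'a" where
  "competitor_vel x p \<omega> t = (if t < 1 then - x else \<omega> *\<^sub>R polygon_vel p (\<omega> * (t - 1)))"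

definition competitor_corners :: "real \<Rightarrow> real \<Rightarrow> real set" where
  "competitor_corners T \<omega> = {0, 1, T} \<union> range (\<lambda>j::int. 1 + of_int j / \<omega>)"

definition perimeter :: "(int \<Rightarrow> 'a::real_normed_vector) \<Rightarrow> real" where
  "perimeter p = norm (p 1 - p 0) + norm (p 2 - p 1) + norm (p 0 - p 2)"

definition vertex_size :: "(int \<Rightarrow> 'a::real_normed_vector) \<Rightarrow> real" where
  "vertex_size p = norm (p 0) + norm (p 1) + norm (p 2)"

lemma competitor_corners_negligible: "negligible (competitor_corners T \<omega>)"
  unfolding competitor_corners_def by (intro negligible_Un negligible_countable) auto

lemma competitor_before: "t \<le> 1 \<Longrightarrow> competitor x p \<omega> t = (1 - t) *\<^sub>R x"
  by (simp add: competitor_def)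

lemma competitor_after:
  assumes "p 0 = 0" "t \<ge> 1"
  shows "competitor x p \<omega> t = polygon_pos p (\<omega> * (t - 1))"
  using assms by (cases "t = 1") (auto simp: competitor_def polygon_pos_def)

lemma competitor_vel_bound:
  fixes x :: "'a::euclidean_space" and p :: "int \<Rightarrow> 'a"
  assumes "\<And>j. p j = p (j mod 3)" "\<omega> \<ge> 0"
  shows "norm (competitor_vel x p \<omega> t) \<le> norm x + \<omega> * perimeter p"
proof (cases "t < 1")
  case False
  then have "norm (competitor_vel x p \<omega> t) = \<omega> * norm (polygon_vel p (\<omega> * (t - 1)))"
    using assms(2) by (simp add: competitor_vel_def)
  also have "\<dots> \<le> \<omega> * perimeter p"
    using polygon_vel_bound[where p=p, OF assms(1)] assms(2) by (intro mult_left_mono) (auto simp: perimeter_def)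
  finally show ?thesis using norm_ge_zero[of x] by linarith
qed (use assms in \<open>auto simp: competitor_vel_def perimeter_def\<close>)

lemma competitor_lipschitz:
  fixes x :: "'a::euclidean_space" and p :: "int \<Rightarrow> 'a"
  assumes pper: "\<And>j. p j = p (j mod 3)" and p0: "p 0 = 0" and \<omega>: "\<omega> \<ge> 0"
  shows "norm (competitor x p \<omega> s - competitor x p \<omega> t) \<le> (norm x + \<omega> * perimeter p) * \<bar>s - t\<bar>"
proof -
  let ?\<psi> = "competitor x p \<omega>" and ?L = "norm x + \<omega> * perimeter p"
  have Lp: "norm x \<le> ?L" "\<omega> * perimeter p \<le> ?L" using \<omega> by (auto simp: perimeter_def)
  have first: "norm (?\<psi> s - ?\<psi> t) \<le> ?L * \<bar>s - t\<bar>" if "s \<le> 1" "t \<le> 1" for s t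
  proof -
    have "norm (?\<psi> s - ?\<psi> t) = \<bar>s - t\<bar> * norm x"
      using that by (simp add: competitor_before algebra_simps abs_minus_commute flip: scaleR_diff_left)
    also have "\<dots> \<le> \<bar>s - t\<bar> * ?L" using Lp by (intro mult_left_mono) auto
    finally show ?thesis by (simp add: mult.commute)
  qed
  have second: "norm (?\<psi> s - ?\<psi> t) \<le> ?L * \<bar>s - t\<bar>" if "s \<ge> 1" "t \<ge> 1" for s t
  proof -
    have "norm (?\<psi> s - ?\<psi> t) \<le> perimeter p * \<bar>\<omega> * (s - 1) - \<omega> * (t - 1)\<bar>"
      using that polygon_pos_lipschitz[OF polygon_vel_bound[where p=p, OF pper]]
      by (simp add: competitor_after[where p=p, OF p0] perimeter_def)
    also have "\<dots> = (\<omega> * perimeter p) * \<bar>s - t\<bar>"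
      using \<omega> by (simp add: abs_mult right_diff_distrib[symmetric])
    also have "\<dots> \<le> ?L * \<bar>s - t\<bar>" using Lp by (intro mult_right_mono) auto
    finally show ?thesis .
  qed
  have ordered: "norm (?\<psi> s - ?\<psi> t) \<le> ?L * \<bar>s - t\<bar>" if st: "s \<le> t" for s t
  proof -
    consider "t \<le> 1" | "1 \<le> s" | "s < 1" "1 < t" by linarith
    then show ?thesis
    proof cases
      case 3
      have "norm (?\<psi> s - ?\<psi> t) \<le> norm (?\<psi> s - ?\<psi> 1) + norm (?\<psi> 1 - ?\<psi> t)"
        using norm_triangle_ineq[of "?\<psi> s - ?\<psi> 1" "?\<psi> 1 - ?\<psi> t"] by simp
      also have "\<dots> \<le> ?L * \<bar>s - 1\<bar> + ?L * \<bar>1 - t\<bar>"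
        using first[of s 1] second[of 1 t] 3 by (intro add_mono) auto
      also have "\<dots> = ?L * \<bar>s - t\<bar>" using 3 by (simp add: algebra_simps abs_if)
      finally show ?thesis .
    qed (use first[of s t] second[of s t] st in auto)
  qed
  show ?thesis
    using ordered[of s t] ordered[of t s] by (cases "s \<le> t") (auto simp: norm_minus_commute abs_minus_commute)
qed

lemma competitor_norm_bound:
  fixes x :: "'a::euclidean_space" and p :: "int \<Rightarrow> 'a"
  assumes pper: "\<And>j. p j = p (j mod 3)" and p0: "p 0 = 0" and t: "t \<ge> 0"
  shows "norm (competitor x p \<omega> t) \<le> norm x + vertex_size p"
proof (cases "t \<le> 1")
  case True
  then have "norm (competitor x p \<omega> t) = (1 - t) * norm x" using t by (simp add: competitor_before)
  also have "\<dots> \<le> norm x" using t by (simp add: mult_le_cancel_right2)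
  finally show ?thesis by (simp add: vertex_size_def add_increasing2)
next
  case False
  then have "norm (competitor x p \<omega> t) \<le> vertex_size p"
    using polygon_pos_bound[where p=p, OF pper] by (simp add: competitor_def vertex_size_def)
  then show ?thesis using norm_ge_zero[of x] by linarith
qed

lemma competitor_has_derivative:
  fixes x :: "'a::euclidean_space" and p :: "int \<Rightarrow> 'a"
  assumes p0: "p 0 = 0" and t: "t \<notin> competitor_corners T \<omega>"
  shows "(competitor x p \<omega> has_vector_derivative competitor_vel x p \<omega> t) (at t)"
proof (cases "t < 1")
  case True
  have "((\<lambda>t. (1 - t) *\<^sub>R x) has_vector_derivative - x) (at t)"
    by (auto intro!: derivative_eq_intros)
  then have "(competitor x p \<omega> has_vector_derivative - x) (at t)"
    by (rule has_vector_derivative_transform_within_open[of _ _ _ "{..<1}"])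
       (use True in \<open>auto simp: competitor_before\<close>)
  then show ?thesis using True by (simp add: competitor_vel_def)
next
  case False
  then have t1: "t > 1" using t unfolding competitor_corners_def by auto
  have "((\<lambda>t. polygon_pos p (\<omega> * (t - 1))) has_vector_derivative \<omega> *\<^sub>R polygon_vel p (\<omega> * (t - 1))) (at t)"
  proof (cases "\<omega> = 0")
    case True
    then show ?thesis by (simp add: has_vector_derivative_const)
  next
    case \<omega>0: False
    have "\<omega> * (t - 1) \<notin> \<int>"
    proof
      assume "\<omega> * (t - 1) \<in> \<int>"
      then obtain j where "\<omega> * (t - 1) = of_int j" by (auto elim: Ints_cases)
      then have "t = 1 + of_int j / \<omega>" using \<omega>0 by (simp add: field_simps)
      then show False using t unfolding competitor_corners_def by auto
    qed
    then have "(polygon_pos p has_vector_derivative polygon_vel p (\<omega> * (t - 1))) (at (\<omega> * (t - 1)))"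
      by (rule polygon_pos_derivative)
    moreover have "((\<lambda>t. \<omega> * (t - 1)) has_vector_derivative \<omega>) (at t)"
      by (auto intro!: derivative_eq_intros simp flip: has_real_derivative_iff_has_vector_derivative)
    ultimately have "((polygon_pos p \<circ> (\<lambda>t. \<omega> * (t - 1))) has_vector_derivative
        \<omega> *\<^sub>R polygon_vel p (\<omega> * (t - 1))) (at t)"
      using vector_diff_chain_within[of "\<lambda>t. \<omega> * (t - 1)" \<omega> t UNIV "polygon_pos p"]
        has_vector_derivative_at_within by blast
    then show ?thesis by (simp add: o_def)
  qed
  then have "(competitor x p \<omega> has_vector_derivative \<omega> *\<^sub>R polygon_vel p (\<omega> * (t - 1))) (at t)"
    by (rule has_vector_derivative_transform_within_open[of _ _ _ "{1<..}"])
       (use t1 in \<open>auto simp: competitor_after[where p=p, OF p0]\<close>)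
  then show ?thesis using t1 by (simp add: competitor_vel_def)
qed

lemma competitor_in_H_Tx:
  fixes x :: "'a::euclidean_space" and p :: "int \<Rightarrow> 'a"
  assumes pper: "\<And>j. p j = p (j mod 3)" and p0: "p 0 = 0" and \<omega>: "\<omega> \<ge> 0" and T: "T > 0"
  shows "competitor x p \<omega> \<in> H_Tx T x"
    and "\<And>t. t \<in> {0..T} - competitor_corners T \<omega> \<Longrightarrow> dpath T (competitor x p \<omega>) t = competitor_vel x p \<omega> t"
proof -
  have der: "(competitor x p \<omega> has_vector_derivative competitor_vel x p \<omega> t) (at t within {0..T})"
    if "t \<in> {0..T} - competitor_corners T \<omega>" for t
    using competitor_has_derivative[where p=p, OF p0] that has_vector_derivative_at_within by blast
  note in_H = lipschitz_path_in_H_T[OF T _ competitor_lipschitz[where p=p, OF pper p0 \<omega>]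
      competitor_corners_negligible[of T \<omega>] der competitor_vel_bound[where p=p, OF pper \<omega>]]
  show "competitor x p \<omega> \<in> H_Tx T x"
    using in_H(1) \<omega> by (simp add: H_Tx_def perimeter_def competitor_before)
  show "dpath T (competitor x p \<omega>) t = competitor_vel x p \<omega> t"
    if "t \<in> {0..T} - competitor_corners T \<omega>" for t
    using in_H(2) that \<omega> by (simp add: perimeter_def)
qed

lemma integral_rescale_from_one:
  fixes g :: "real \<Rightarrow> real"
  assumes g: "g integrable_on {0..\<omega> * (T - 1)}" and \<omega>: "\<omega> \<ge> 0"
  shows "integral {1..T} (\<lambda>t. \<omega> * g (\<omega> * (t - 1))) = integral {0..\<omega> * (T - 1)} g"
proof (cases "\<omega> = 0")
  case False
  then have \<omega>p: "\<omega> > 0" using \<omega> by simp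
  define \<theta> where "\<theta> = \<omega> * (T - 1)"
  have "((\<lambda>t. g (\<omega> *\<^sub>R t + - \<omega>)) has_integral (integral {0..\<theta>} g /\<^sub>R \<omega> ^ DIM(real)))
      (cbox ((0 - - \<omega>) /\<^sub>R \<omega>) ((\<theta> - - \<omega>) /\<^sub>R \<omega>))"
    using g unfolding \<theta>_def by (intro has_integral_affinity'[OF _ \<omega>p]) (simp add: integrable_integral)
  moreover have "(0 - - \<omega>) /\<^sub>R \<omega> = 1" "(\<theta> - - \<omega>) /\<^sub>R \<omega> = T"
    using \<omega>p unfolding \<theta>_def by (simp_all add: divide_simps) (simp add: algebra_simps)
  moreover have "(\<lambda>t. g (\<omega> *\<^sub>R t + - \<omega>)) = (\<lambda>t. g (\<omega> * (t - 1)))"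
    by (simp add: algebra_simps)
  moreover have "integral {0..\<theta>} g /\<^sub>R \<omega> ^ DIM(real) = integral {0..\<theta>} g / \<omega>"
    by (simp add: divide_inverse mult.commute)
  ultimately have "((\<lambda>t. g (\<omega> * (t - 1))) has_integral (integral {0..\<omega> * (T - 1)} g / \<omega>)) {1..T}"
    by (simp add: \<theta>_def)
  then have "((\<lambda>t. \<omega> * g (\<omega> * (t - 1))) has_integral \<omega> * (integral {0..\<omega> * (T - 1)} g / \<omega>)) {1..T}"
    by (rule has_integral_mult_right)
  then have "integral {1..T} (\<lambda>t. \<omega> * g (\<omega> * (t - 1))) = \<omega> * (integral {0..\<omega> * (T - 1)} g / \<omega>)"
    by (rule integral_unique)
  with \<omega>p show ?thesis by simp
qed simp

lemma competitor_work:
  fixes x :: "'a::euclidean_space" and p :: "int \<Rightarrow> 'a" and b :: "'a \<Rightarrow> 'a"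
  assumes bc: "continuous_on UNIV b" and M: "\<And>z. norm (b z) \<le> M"
    and pper: "\<And>j. p j = p (j mod 3)" and p0: "p 0 = 0" and \<omega>: "\<omega> \<ge> 0" and T: "T > 1"
  shows "(LINT t:{0..T}|lebesgue. inner (b (competitor x p \<omega> t)) (dpath T (competitor x p \<omega>) t))
      = segment_work b x (- x) + integral {0..\<omega> * (T - 1)} (polygon_power b p)"
proof -
  let ?\<psi> = "competitor x p \<omega>" and ?E = "competitor_corners T \<omega>"
  note H = competitor_in_H_Tx[where p=p and x=x and T=T, OF pper p0 \<omega>, OF order.strict_trans[OF zero_less_one T]]
  define f where "f t = inner (b (?\<psi> t)) (dpath T ?\<psi> t)" for t
  define f' where "f' t = inner (b (?\<psi> t)) (competitor_vel x p \<omega> t)" for t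
  have \<psi>H: "?\<psi> \<in> H_T T" using H(1) T by (simp add: H_Tx_def)
  have E: "negligible ?E" by (rule competitor_corners_negligible)
  have ff': "f t = f' t" if "t \<in> {0..T} - ?E" for t using H(2)[OF that] by (simp add: f_def f'_def)
  have "continuous_on {0..T} (\<lambda>t. b (?\<psi> t))"
    by (rule continuous_on_compose2[OF bc H_T_continuous[OF \<psi>H]]) auto
  then have "(\<lambda>t. b (?\<psi> t)) \<in> borel_measurable (lebesgue_on {0..T})"
    by (rule continuous_imp_measurable_on_sets_lebesgue) simp
  then have "f measurable_on {0..T}"
    using H_T_dpath_measurable[OF \<psi>H] unfolding f_def
    by (simp add: measurable_on_iff_borel_measurable) measurable
  then have fi: "f absolutely_integrable_on {0..T}"
  proof (rule bounded_ae_imp_absolutely_integrable[OF _ E])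
    fix t assume t: "t \<in> {0..T} - ?E"
    have "norm (f t) \<le> norm (b (?\<psi> t)) * norm (competitor_vel x p \<omega> t)"
      using ff'[OF t] by (simp add: f'_def Cauchy_Schwarz_ineq2)
    also have "\<dots> \<le> M * (norm x + \<omega> * perimeter p)"
      using M competitor_vel_bound[where p=p, OF pper \<omega>] order_trans[OF norm_ge_zero M]
      by (intro mult_mono) auto
    finally show "norm (f t) \<le> M * (norm x + \<omega> * perimeter p)" .
  qed
  have f'i: "f' integrable_on {0..T}"
    using integrable_spike[OF set_lebesgue_integral_eq_integral(1)[OF fi] E] ff' by auto
  have "(LINT t:{0..T}|lebesgue. inner (b (?\<psi> t)) (dpath T ?\<psi> t)) = integral {0..T} f"
    using set_lebesgue_integral_eq_integral(2)[OF fi] by (simp add: f_def)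
  also have "\<dots> = integral {0..T} f'" by (rule integral_spike[OF E]) (simp add: ff')
  also have "\<dots> = integral {0..1} f' + integral {1..T} f'"
    using T by (intro Henstock_Kurzweil_Integration.integral_combine[OF _ _ f'i, symmetric]) auto
  also have "integral {0..1} f' = segment_work b x (- x)"
    unfolding segment_work_def
    by (rule integral_spike[of "{1}"]) (auto simp: f'_def competitor_def competitor_vel_def algebra_simps)
  also have "integral {1..T} f' = integral {1..T} (\<lambda>t. \<omega> * polygon_power b p (\<omega> * (t - 1)))"
    by (rule integral_spike[of "{1}"]) (auto simp: f'_def competitor_def competitor_vel_def polygon_power_def)
  also have "\<dots> = integral {0..\<omega> * (T - 1)} (polygon_power b p)"
    by (rule integral_rescale_from_one[OF polygon_power_integrable[OF bc] \<omega>])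
  finally show ?thesis .
qed

lemma competitor_action_bound:
  fixes x :: "'a::euclidean_space" and p :: "int \<Rightarrow> 'a" and b gV :: "'a \<Rightarrow> 'a"
  assumes bc: "continuous_on UNIV b" and gVc: "continuous_on UNIV gV"
    and Mc: "\<And>z. norm z \<le> norm x + vertex_size p \<Longrightarrow> norm (cfield gV b z) \<le> Mc"
    and pper: "\<And>j. p j = p (j mod 3)" and p0: "p 0 = 0" and \<omega>: "\<omega> \<ge> 0" and T: "T > 1"
  shows "(LINT t:{0..T}|lebesgue. (norm (dpath T (competitor x p \<omega>) t - cfield gV b (competitor x p \<omega> t)))\<^sup>2)
      \<le> T * (norm x + \<omega> * perimeter p + Mc)\<^sup>2"
proof -
  let ?\<psi> = "competitor x p \<omega>" and ?E = "competitor_corners T \<omega>"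
  note H = competitor_in_H_Tx[where p=p and x=x and T=T, OF pper p0 \<omega>, OF order.strict_trans[OF zero_less_one T]]
  define h where "h t = (norm (dpath T ?\<psi> t - cfield gV b (?\<psi> t)))\<^sup>2" for t
  define B where "B = (norm x + \<omega> * perimeter p + Mc)\<^sup>2"
  have \<psi>H: "?\<psi> \<in> H_T T" using H(1) T by (simp add: H_Tx_def)
  have E: "negligible ?E" by (rule competitor_corners_negligible)
  have hi: "h absolutely_integrable_on {0..T}"
    unfolding h_def by (rule action_density_integrable[OF gVc bc \<psi>H])
  have hB: "h t \<le> B" if t: "t \<in> {0..T} - ?E" for t
  proof -
    have "norm (dpath T ?\<psi> t - cfield gV b (?\<psi> t))
        \<le> norm (competitor_vel x p \<omega> t) + norm (cfield gV b (?\<psi> t))"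
      using H(2)[OF t] norm_triangle_ineq4 by simp
    also have "\<dots> \<le> norm x + \<omega> * perimeter p + Mc"
      using competitor_vel_bound[where p=p, OF pper \<omega>] Mc competitor_norm_bound[where p=p, OF pper p0] t
      by (intro add_mono) auto
    finally show ?thesis unfolding h_def B_def by (intro power_mono) auto
  qed
  have "(LINT t:{0..T}|lebesgue. h t) = integral {0..T} h"
    by (rule set_lebesgue_integral_eq_integral(2)[OF hi])
  also have "\<dots> \<le> integral {0..T} (\<lambda>t. if t \<in> ?E then h t else B)"
  proof (rule integral_le)
    show "h integrable_on {0..T}" by (rule set_lebesgue_integral_eq_integral(1)[OF hi])
    show "(\<lambda>t. if t \<in> ?E then h t else B) integrable_on {0..T}"
      by (rule integrable_spike[OF integrable_const_ivl[of B 0 T] E]) auto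
    show "h t \<le> (if t \<in> ?E then h t else B)" if "t \<in> {0..T}" for t
      using hB that by auto
  qed
  also have "\<dots> = integral {0..T} (\<lambda>t. B)" by (rule integral_spike[OF E]) auto
  also have "\<dots> = T * B" using T by simp
  finally show ?thesis by (simp add: h_def B_def)
qed

lemma competitor_admissible:
  fixes x :: "'a::euclidean_space" and p :: "int \<Rightarrow> 'a" and b :: "'a \<Rightarrow> 'a"
  assumes bc: "continuous_on UNIV b" and M: "\<And>z. norm (b z) \<le> M"
    and pper: "\<And>j. p j = p (j mod 3)" and p0: "p 0 = 0" and \<theta>: "\<theta> \<ge> 0" and T: "T > 1"
    and work: "integral {0..\<theta>} (polygon_power b p) = q * T / 2 - segment_work b x (- x)"
  shows "competitor x p (\<theta> / (T - 1)) \<in> A_T b T x q"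
proof -
  have \<omega>: "\<theta> / (T - 1) \<ge> 0" and \<theta>\<omega>: "\<theta> / (T - 1) * (T - 1) = \<theta>" using \<theta> T by auto
  have "L_T b T (competitor x p (\<theta> / (T - 1))) = q"
    unfolding L_T_def competitor_work[where p=p, OF bc M pper p0 \<omega> T] \<theta>\<omega> work using T by simp
  then show ?thesis
    using competitor_in_H_Tx(1)[where p=p, OF pper p0 \<omega>] T by (simp add: A_T_def)
qed

lemma loop_time_bound:
  fixes k Q M X T q W :: real
  assumes k: "k > 0" and T: "T \<ge> 2" and q: "\<bar>q\<bar> \<le> Q" and W: "\<bar>W\<bar> \<le> M * X" and MX: "M * X \<ge> 0"
  shows "3 * (\<bar>q * T / 2 - W\<bar> / k + 1) \<le> (3 * Q / k + 3 * (M * X / k + 1)) * (T - 1)"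
proof -
  have "\<bar>q * T / 2\<bar> = \<bar>q\<bar> * (T / 2)" using T by (simp add: abs_mult)
  also have "\<dots> \<le> Q * (T - 1)" using q T by (intro mult_mono) auto
  finally have qT: "\<bar>q * T / 2\<bar> \<le> Q * (T - 1)" .
  have "M * X * 1 \<le> M * X * (T - 1)" using MX T by (intro mult_left_mono) auto
  then have A: "\<bar>q * T / 2 - W\<bar> \<le> Q * (T - 1) + M * X * (T - 1)"
    using qT W abs_triangle_ineq4[of "q * T / 2" W] by linarith
  have "\<bar>q * T / 2 - W\<bar> / k \<le> (Q / k) * (T - 1) + (M * X / k) * (T - 1)"
    using divide_right_mono[OF A less_imp_le[OF k]] by (simp add: add_divide_distrib)
  moreover define a c where "a = \<bar>q * T / 2 - W\<bar> / k" and "c = (Q / k) * (T - 1) + (M * X / k) * (T - 1)"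
  ultimately have "3 * (a + 1) \<le> 3 * c + 3 * (T - 1)" using T by simp
  also have "\<dots> = (3 * Q / k + 3 * (M * X / k + 1)) * (T - 1)"
    unfolding c_def by (simp add: algebra_simps)
  finally show ?thesis unfolding a_def .
qed

lemma competitor_exists:
  fixes b gV :: "'a::euclidean_space \<Rightarrow> 'a" and p :: "int \<Rightarrow> 'a"
  assumes bc: "continuous_on UNIV b" and M: "\<And>z. norm (b z) \<le> M"
    and gVc: "continuous_on UNIV gV"
    and pper: "\<And>j. p j = p (j mod 3)" and p0: "p 0 = 0"
    and \<kappa>: "\<kappa> = edge_work b p 0 + edge_work b p 1 + edge_work b p 2" "\<kappa> \<noteq> 0"
  obtains C where "\<And>T x q. T \<ge> 2 \<Longrightarrow> norm x \<le> X \<Longrightarrow> \<bar>q\<bar> \<le> Q \<Longrightarrow>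
      (q * T / 2 - segment_work b x (- x)) / \<kappa> \<ge> 0 \<Longrightarrow>
      \<exists>\<psi> \<in> A_T b T x q. I_T gV b T x \<psi> \<le> ereal (C * T)"
proof -
  have M0: "M \<ge> 0" using order_trans[OF norm_ge_zero M] .
  define \<Omega> where "\<Omega> = 3 * \<bar>Q\<bar> / \<bar>\<kappa>\<bar> + 3 * (M * \<bar>X\<bar> / \<bar>\<kappa>\<bar> + 1)"
  have cc: "continuous_on UNIV (cfield gV b)" unfolding cfield_def by (intro continuous_intros gVc bc)
  obtain Mc where Mc: "\<And>z. z \<in> cball 0 (\<bar>X\<bar> + vertex_size p) \<Longrightarrow> norm (cfield gV b z) \<le> Mc"
    using continuous_on_compact_bound[OF compact_cball continuous_on_subset[OF cc subset_UNIV]] by blast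
  define C where "C = (1/2) * (\<bar>X\<bar> + \<Omega> * perimeter p + \<bar>Mc\<bar>)\<^sup>2"
  show ?thesis
  proof (rule that[of C])
    fix T q :: real and x :: 'a
    assume T: "T \<ge> 2" and x: "norm x \<le> X" and q: "\<bar>q\<bar> \<le> Q"
      and sign: "(q * T / 2 - segment_work b x (- x)) / \<kappa> \<ge> 0"
    define A where "A = q * T / 2 - segment_work b x (- x)"
    obtain \<theta> where \<theta>: "0 \<le> \<theta>" "\<theta> \<le> 3 * (A / \<kappa> + 1)" "integral {0..\<theta>} (polygon_power b p) = A"
      using polygon_power_integral_reaches[where p=p, OF bc pper \<kappa>, of A] sign unfolding A_def by blast
    define \<omega> where "\<omega> = \<theta> / (T - 1)"
    have \<omega>0: "\<omega> \<ge> 0" using \<theta>(1) T by (simp add: \<omega>_def)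
    have "\<bar>A / \<kappa>\<bar> = A / \<kappa>" using sign unfolding A_def by (rule abs_of_nonneg)
    then have "\<theta> \<le> 3 * (\<bar>A\<bar> / \<bar>\<kappa>\<bar> + 1)" using \<theta>(2) by (simp add: abs_divide)
    also have "\<dots> \<le> \<Omega> * (T - 1)"
      unfolding \<Omega>_def A_def
    proof (rule loop_time_bound)
      have "\<bar>segment_work b x (- x)\<bar> \<le> M * norm x" using segment_work_bound[OF bc M, of x "- x"] by simp
      also have "\<dots> \<le> M * \<bar>X\<bar>" using x M0 by (intro mult_left_mono) auto
      finally show "\<bar>segment_work b x (- x)\<bar> \<le> M * \<bar>X\<bar>" .
    qed (use \<kappa>(2) T q M0 in auto)
    finally have \<omega>\<Omega>: "\<omega> \<le> \<Omega>" using T by (simp add: \<omega>_def pos_divide_le_eq)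
    have \<psi>A: "competitor x p \<omega> \<in> A_T b T x q"
      unfolding \<omega>_def by (rule competitor_admissible[where p=p, OF bc M pper p0 \<theta>(1)]) (use T \<theta>(3) A_def in auto)
    have Mc': "norm (cfield gV b z) \<le> \<bar>Mc\<bar>" if "norm z \<le> norm x + vertex_size p" for z
    proof -
      have "norm z \<le> \<bar>X\<bar> + vertex_size p" using that x by linarith
      then show ?thesis using Mc[of z] by simp
    qed
    have "(LINT t:{0..T}|lebesgue. (norm (dpath T (competitor x p \<omega>) t - cfield gV b (competitor x p \<omega> t)))\<^sup>2)
        \<le> T * (norm x + \<omega> * perimeter p + \<bar>Mc\<bar>)\<^sup>2"
      using competitor_action_bound[where p=p, OF bc gVc Mc' pper p0 \<omega>0] T by simp
    also have "\<dots> \<le> T * (\<bar>X\<bar> + \<Omega> * perimeter p + \<bar>Mc\<bar>)\<^sup>2"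
      using x \<omega>\<Omega> \<omega>0 T by (intro mult_left_mono power_mono add_mono mult_right_mono)
        (auto simp: perimeter_def)
    finally have "I_T gV b T x (competitor x p \<omega>) \<le> ereal (C * T)"
      using \<psi>A by (simp add: I_T_def A_T_def C_def mult.commute)
    with \<psi>A show "\<exists>\<psi> \<in> A_T b T x q. I_T gV b T x \<psi> \<le> ereal (C * T)" by blast
  qed
qed

text \<open>Competitors of linear action for every bounded constraint: choose a triangle with nonzero
  circulation and run around it in the direction that produces work of the required sign.\<close>
lemma linear_action_competitors:
  fixes b gV :: "'a::euclidean_space \<Rightarrow> 'a"
  assumes bc: "continuous_on UNIV b" and M: "\<And>z. norm (b z) \<le> M"
    and gVc: "continuous_on UNIV gV"
    and nc: "\<not> (\<exists>U :: 'a \<Rightarrow> real. \<forall>z. (U has_derivative (\<lambda>h. inner (b z) h)) (at z))"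
  obtains C where "\<And>T x q. T \<ge> 2 \<Longrightarrow> norm x \<le> X \<Longrightarrow> \<bar>q\<bar> \<le> Q \<Longrightarrow>
      \<exists>\<psi> \<in> A_T b T x q. I_T gV b T x \<psi> \<le> ereal (C * T)"
proof -
  obtain z h where circ: "triangle_circulation b z h \<noteq> 0"
    using nonconservative_triangle[OF bc nc] by blast
  define \<kappa> where "\<kappa> = triangle_circulation b z h"
  obtain C1 where C1: "\<And>T x q. T \<ge> 2 \<Longrightarrow> norm x \<le> X \<Longrightarrow> \<bar>q\<bar> \<le> Q \<Longrightarrow>
      (q * T / 2 - segment_work b x (- x)) / \<kappa> \<ge> 0 \<Longrightarrow>
      \<exists>\<psi> \<in> A_T b T x q. I_T gV b T x \<psi> \<le> ereal (C1 * T)"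
    using competitor_exists[where p="triangle_loop z h", OF bc M gVc triangle_loop_periodic
        triangle_loop_zero triangle_loop_circulation[symmetric]] circ
    unfolding \<kappa>_def by blast
  have reverse: "edge_work b (triangle_loop (z + h) (- h)) 0 + edge_work b (triangle_loop (z + h) (- h)) 1
      + edge_work b (triangle_loop (z + h) (- h)) 2 = - \<kappa>"
    unfolding \<kappa>_def triangle_loop_circulation triangle_circulation_reverse[OF bc] ..
  have "- \<kappa> \<noteq> 0" using circ by (simp add: \<kappa>_def)
  obtain C2 where C2: "\<And>T x q. T \<ge> 2 \<Longrightarrow> norm x \<le> X \<Longrightarrow> \<bar>q\<bar> \<le> Q \<Longrightarrow>
      (q * T / 2 - segment_work b x (- x)) / (- \<kappa>) \<ge> 0 \<Longrightarrow>
      \<exists>\<psi> \<in> A_T b T x q. I_T gV b T x \<psi> \<le> ereal (C2 * T)"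
    using competitor_exists[where p="triangle_loop (z + h) (- h)", OF bc M gVc triangle_loop_periodic
        triangle_loop_zero reverse[symmetric] \<open>- \<kappa> \<noteq> 0\<close>] by blast
  show ?thesis
  proof (rule that[of "max C1 C2"])
    fix T q :: real and x :: 'a
    assume T: "T \<ge> 2" and x: "norm x \<le> X" and q: "\<bar>q\<bar> \<le> Q"
    have "\<exists>\<psi> \<in> A_T b T x q. I_T gV b T x \<psi> \<le> ereal (C1 * T) \<or> I_T gV b T x \<psi> \<le> ereal (C2 * T)"
    proof (cases "(q * T / 2 - segment_work b x (- x)) / \<kappa> \<ge> 0")
      case True
      then show ?thesis using C1[OF T x q] by blast
    next
      case False
      then have "(q * T / 2 - segment_work b x (- x)) / (- \<kappa>) \<ge> 0" by simp
      then show ?thesis using C2[OF T x q] by blast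
    qed
    moreover have "ereal (C1 * T) \<le> ereal (max C1 C2 * T)" "ereal (C2 * T) \<le> ereal (max C1 C2 * T)"
      using T by (auto intro: mult_right_mono)
    ultimately show "\<exists>\<psi> \<in> A_T b T x q. I_T gV b T x \<psi> \<le> ereal (max C1 C2 * T)"
      by (meson order_trans)
  qed
qed

lemma minimizer_action_le:
  assumes \<phi>: "\<phi> \<in> A_T b T x q" and min: "I_T gV b T x \<phi> = S_T gV b T x q"
    and \<psi>: "\<psi> \<in> A_T b T x q" "I_T gV b T x \<psi> \<le> ereal c"
  shows "(1/2) * (LINT t:{0..T}|lebesgue. (norm (dpath T \<phi> t - cfield gV b (\<phi> t)))\<^sup>2) \<le> c"
proof -
  have "I_T gV b T x \<phi> \<le> I_T gV b T x \<psi>"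
    unfolding min S_T_def by (rule INF_lower[OF \<psi>(1)])
  with \<psi>(2) have "I_T gV b T x \<phi> \<le> ereal c" by (rule order_trans[rotated])
  with \<phi> show ?thesis by (simp add: I_T_def A_T_def)
qed

lemma minimizer_endpoint_bound:
  fixes V :: "'a::euclidean_space \<Rightarrow> real" and gV b :: "'a \<Rightarrow> 'a"
  assumes V_grad: "\<And>z. (V has_derivative (\<lambda>h. inner (gV z) h)) (at z)"
    and gVc: "continuous_on UNIV gV" and bc: "continuous_on UNIV b"
    and orth: "\<And>z. inner (gV z) (b z) = 0" and coercive: "\<And>y. norm y \<le> V y + B" and T: "T > 0"
    and \<phi>: "\<phi> \<in> A_T b T x q" and min: "I_T gV b T x \<phi> = S_T gV b T x q"
    and \<psi>: "\<psi> \<in> A_T b T x q" "I_T gV b T x \<psi> \<le> ereal c"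
  shows "norm (\<phi> T) \<le> V x + B + c"
proof -
  have \<phi>H: "\<phi> \<in> H_T T" "\<phi> 0 = x" using \<phi> by (auto simp: A_T_def H_Tx_def)
  have "V (\<phi> T) - V x \<le> (1/2) * (LINT t:{0..T}|lebesgue. (norm (dpath T \<phi> t - cfield gV b (\<phi> t)))\<^sup>2)"
    using energy_inequality[OF V_grad gVc bc orth T \<phi>H(1)] \<phi>H(2) by simp
  also have "\<dots> \<le> c" by (rule minimizer_action_le[OF \<phi> min \<psi>])
  finally show ?thesis using coercive[of "\<phi> T"] by simp
qed

text \<open>A bound \<open>a n \<le> K0 + K T n\<close> that holds once \<open>T n \<ge> 2\<close>, with \<open>T n \<rightarrow> \<infinity>\<close>, gives
  \<open>a n \<le> C (T n + 1)\<close> for all \<open>n\<close>, after enlarging the constant to cover the finitely many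
  remaining terms.\<close>
lemma linear_bound_from_eventual:
  fixes a T :: "nat \<Rightarrow> real"
  assumes T_lim: "filterlim T at_top sequentially" and T_pos: "\<And>n. T n > 0"
    and bound: "\<And>n. T n \<ge> 2 \<Longrightarrow> a n \<le> K0 + K * T n"
  shows "\<exists>C>0. \<forall>n. a n \<le> C * (T n + 1)"
proof -
  obtain N where N: "\<And>n. n \<ge> N \<Longrightarrow> T n \<ge> 2"
    using T_lim unfolding filterlim_at_top eventually_sequentially by blast
  define Y where "Y = (\<Sum>n<N. \<bar>a n\<bar>)"
  have Y0: "Y \<ge> 0" unfolding Y_def by (intro sum_nonneg) auto
  define C where "C = \<bar>K0\<bar> + \<bar>K\<bar> + Y + 1"
  have "a n \<le> C * (T n + 1)" for n
  proof (cases "T n \<ge> 2")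
    case True
    have "K0 \<le> \<bar>K0\<bar> * (T n + 1)"
      using True mult_left_mono[of 1 "T n + 1" "\<bar>K0\<bar>"] by linarith
    moreover have "K * T n \<le> \<bar>K\<bar> * (T n + 1)"
      using True mult_mono[OF abs_ge_self[of K], of "T n" "T n + 1"] by auto
    moreover have "(\<bar>K0\<bar> + \<bar>K\<bar>) * (T n + 1) \<le> C * (T n + 1)"
      using T_pos[of n] Y0 by (intro mult_right_mono) (auto simp: C_def)
    ultimately show ?thesis using bound[OF True] by (simp add: distrib_right)
  next
    case False
    then have "n < N" using N by (meson not_le_imp_less)
    then have "a n \<le> Y" unfolding Y_def by (meson abs_ge_self finite_lessThan lessThan_iff member_le_sum
          abs_ge_zero order_trans)
    also have "\<dots> \<le> C * 1" by (simp add: C_def)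
    also have "\<dots> \<le> C * (T n + 1)" using T_pos[of n] Y0 by (intro mult_left_mono) (auto simp: C_def)
    finally show ?thesis .
  qed
  moreover have "C > 0" using Y0 by (simp add: C_def add_pos_nonneg)
  ultimately show ?thesis by blast
qed

theorem lemma5p4:
  fixes V :: "'a::euclidean_space \<Rightarrow> real"
    and gV b :: "'a \<Rightarrow> 'a"
    and q :: real and x :: "nat \<Rightarrow> 'a" and T qs :: "nat \<Rightarrow> real"
    and \<phi> :: "nat \<Rightarrow> real \<Rightarrow> 'a"
  assumes V_grad: "\<And>z. (V has_derivative (\<lambda>h. inner (gV z) h)) (at z)"
    and V_C2: "\<exists>D :: 'a \<Rightarrow> 'a \<Rightarrow>\<^sub>L 'a. (\<forall>z. (gV has_derivative blinfun_apply (D z)) (at z))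
                  \<and> continuous_on UNIV D"
    and V_growth: "filterlim (\<lambda>z. inner (gV z) z / norm z) at_top at_infinity"
    and b_C1: "\<exists>D :: 'a \<Rightarrow> 'a \<Rightarrow>\<^sub>L 'a. (\<forall>z. (b has_derivative blinfun_apply (D z)) (at z))
                  \<and> continuous_on UNIV D \<and> bounded (range D)"
    and b_bounded: "bounded (range b)"
    and b_nonconservative: "\<not> (\<exists>U :: 'a \<Rightarrow> real. \<forall>z. (U has_derivative (\<lambda>h. inner (b z) h)) (at z))"
    and orth: "\<And>z. inner (gV z) (b z) = 0"
    and x_bounded: "bounded (range x)"
    and T_pos: "\<And>n. T n > 0"
    and T_lim: "filterlim T at_top sequentially"
    and qs_lim: "qs \<longlonglongrightarrow> q"
    and \<phi>_adm: "\<And>n. \<phi> n \<in> A_T b (T n) (x n) (qs n)"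
    and \<phi>_min: "\<And>n. I_T gV b (T n) (x n) (\<phi> n) = S_T gV b (T n) (x n) (qs n)"
  shows "\<exists>C>0. \<forall>n. norm (\<phi> n (T n)) \<le> C * (T n + 1)"
proof -
  obtain DgV where "\<And>z. (gV has_derivative blinfun_apply (DgV z)) (at z)" using V_C2 by blast
  then have gVc: "continuous_on UNIV gV"
    by (meson continuous_at_imp_continuous_on has_derivative_continuous)
  obtain Db where "\<And>z. (b has_derivative blinfun_apply (Db z)) (at z)" using b_C1 by blast
  then have bc: "continuous_on UNIV b"
    by (meson continuous_at_imp_continuous_on has_derivative_continuous)
  obtain M where M: "\<And>z. norm (b z) \<le> M" using b_bounded unfolding bounded_iff by blast
  obtain X where X: "\<And>n. norm (x n) \<le> X" using x_bounded unfolding bounded_iff by blast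
  obtain Q where Q: "\<And>n. \<bar>qs n\<bar> \<le> Q"
    using convergent_imp_bounded[OF qs_lim] unfolding bounded_iff by auto
  obtain C where C: "\<And>T x q. T \<ge> 2 \<Longrightarrow> norm x \<le> X \<Longrightarrow> \<bar>q\<bar> \<le> Q \<Longrightarrow>
      \<exists>\<psi> \<in> A_T b T x q. I_T gV b T x \<psi> \<le> ereal (C * T)"
    using linear_action_competitors[OF bc M gVc b_nonconservative] by blast
  obtain B where B: "\<And>y. norm y \<le> V y + B" using coercive_lower_bound[OF V_grad V_growth] by blast
  have Vc: "continuous_on UNIV V"
    using V_grad by (meson continuous_at_imp_continuous_on has_derivative_continuous)
  obtain VX where VX: "\<And>y. y \<in> cball 0 X \<Longrightarrow> \<bar>V y\<bar> \<le> VX"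
    using continuous_on_compact_bound[OF compact_cball continuous_on_subset[OF Vc subset_UNIV]]
    unfolding real_norm_def by blast
  have "norm (\<phi> n (T n)) \<le> (VX + B) + C * T n" if Tn: "T n \<ge> 2" for n
  proof -
    obtain \<psi> where \<psi>: "\<psi> \<in> A_T b (T n) (x n) (qs n)" "I_T gV b (T n) (x n) \<psi> \<le> ereal (C * T n)"
      using C[OF Tn X Q] by blast
    have "norm (\<phi> n (T n)) \<le> V (x n) + B + C * T n"
      by (rule minimizer_endpoint_bound[OF V_grad gVc bc orth B T_pos \<phi>_adm \<phi>_min \<psi>])
    then show ?thesis using VX[of "x n"] X[of n] by simp
  qed
  then show ?thesis by (rule linear_bound_from_eventual[OF T_lim T_pos])
qed

end
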